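(* For $n\ge3$, $\mathfrak a_{13}(n)$ equals the real span of $\{iP\}$ over all length-$n$ Pauli strings $P\notin\{I^{\otimes n},X^{\otimes n}\}$ that commute with $X^{\otimes n}$. Consequently $\mathfrak a_{13}(n)\cong\mathfrak{su}(2^{n-1})\oplus\mathfrak{su}(2^{n-1})$.
   Context: Pauli matrices $I,X,Y,Z$; $A_jB_{j+1}$ denotes the length-$n$ Pauli string with $A$ at position $j$, $B$ at $j+1$, $I$ elsewhere. $\mathfrak{su}(N)$ is the Lie algebra of traceless skew-Hermitian matrices; $\oplus$ denotes a direct sum of commuting subalgebras. For a set $S$ of Pauli strings, $\mathrm{Lie}\langle S\rangle$ is the smallest real Lie subalgebra of $\mathfrak u(2^n)$ containing $\{iP:P\in S\}$. $\mathfrak a_{13}(n)=\mathrm{Lie}\langle X_jX_{j+1},Y_jY_{j+1},Y_jZ_{j+1}:1\le j\le n-1\rangle$. *)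

theory Defs
  imports Complex_Main "Jordan_Normal_Form.Matrix"
begin

datatype pauli = PI | PX | PY | PZ

fun pauli_entry :: "pauli \<Rightarrow> nat \<Rightarrow> nat \<Rightarrow> complex" where
  "pauli_entry PI a b = (if a = b then 1 else 0)"
| "pauli_entry PX a b = (if a \<noteq> b then 1 else 0)"
| "pauli_entry PY a b = (if a = b then 0 else if a = 0 then - \<i> else \<i>)"
| "pauli_entry PZ a b = (if a = b then (if a = 0 then 1 else -1) else 0)"

text \<open>Bit of index r belonging to tensor factor j (0-based, leftmost factor = most
  significant bit) in a length-n tensor product.\<close>
definition qbit :: "nat \<Rightarrow> nat \<Rightarrow> nat \<Rightarrow> nat" where
  "qbit n j r = (r div 2 ^ (n - 1 - j)) mod 2"

text \<open>Matrix of the Pauli string P (list of length n) = P!0 \<otimes> ... \<otimes> P!(n-1),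
  written entrywise (the entry of a Kronecker product is the product of entries).\<close>
definition pauli_mat :: "pauli list \<Rightarrow> complex mat" where
  "pauli_mat P = (let n = length P in
     mat (2 ^ n) (2 ^ n) (\<lambda>(r, c). \<Prod>j<n. pauli_entry (P ! j) (qbit n j r) (qbit n j c)))"

definition two_site :: "nat \<Rightarrow> pauli \<Rightarrow> pauli \<Rightarrow> nat \<Rightarrow> pauli list" where
  "two_site n A B j = map (\<lambda>k. if k = j then A else if k = Suc j then B else PI) [0..<n]"

definition commutator :: "complex mat \<Rightarrow> complex mat \<Rightarrow> complex mat" where
  "commutator A B = A * B - B * A"

inductive_set real_span_mat :: "nat \<Rightarrow> complex mat set \<Rightarrow> complex mat set"
  for N :: nat and S :: "complex mat set" where
  zero: "0\<^sub>m N N \<in> real_span_mat N S"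
| gen: "A \<in> S \<Longrightarrow> A \<in> real_span_mat N S"
| add: "A \<in> real_span_mat N S \<Longrightarrow> B \<in> real_span_mat N S \<Longrightarrow> A + B \<in> real_span_mat N S"
| smult: "A \<in> real_span_mat N S \<Longrightarrow> complex_of_real c \<cdot>\<^sub>m A \<in> real_span_mat N S"

inductive_set lie_gen :: "nat \<Rightarrow> complex mat set \<Rightarrow> complex mat set"
  for N :: nat and S :: "complex mat set" where
  zero: "0\<^sub>m N N \<in> lie_gen N S"
| gen: "A \<in> S \<Longrightarrow> A \<in> lie_gen N S"
| add: "A \<in> lie_gen N S \<Longrightarrow> B \<in> lie_gen N S \<Longrightarrow> A + B \<in> lie_gen N S"
| smult: "A \<in> lie_gen N S \<Longrightarrow> complex_of_real c \<cdot>\<^sub>m A \<in> lie_gen N S"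
| bracket: "A \<in> lie_gen N S \<Longrightarrow> B \<in> lie_gen N S \<Longrightarrow> commutator A B \<in> lie_gen N S"

definition a13 :: "nat \<Rightarrow> complex mat set" where
  "a13 n = lie_gen (2 ^ n)
     ((\<lambda>P. \<i> \<cdot>\<^sub>m pauli_mat P) `
       {two_site n A B j | A B j. j + 1 < n \<and> (A, B) \<in> {(PX, PX), (PY, PY), (PY, PZ)}})"

definition conj_transpose :: "complex mat \<Rightarrow> complex mat" where
  "conj_transpose A = mat (dim_col A) (dim_row A) (\<lambda>(i, j). cnj (A $$ (j, i)))"

definition mat_trace :: "complex mat \<Rightarrow> complex" where
  "mat_trace A = (\<Sum>i<dim_row A. A $$ (i, i))"

definition su :: "nat \<Rightarrow> complex mat set" where
  "su N = {A \<in> carrier_mat N N. conj_transpose A = - A \<and> mat_trace A = 0}"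

definition lie_iso_su_sum ::
  "complex mat set \<Rightarrow> nat \<Rightarrow> (complex mat \<Rightarrow> complex mat \<times> complex mat) \<Rightarrow> bool" where
  "lie_iso_su_sum L N f \<longleftrightarrow>
     bij_betw f L (su N \<times> su N) \<and>
     (\<forall>A\<in>L. \<forall>B\<in>L. f (A + B) = (fst (f A) + fst (f B), snd (f A) + snd (f B))) \<and>
     (\<forall>A\<in>L. \<forall>c::real. f (complex_of_real c \<cdot>\<^sub>m A) =
        (complex_of_real c \<cdot>\<^sub>m fst (f A), complex_of_real c \<cdot>\<^sub>m snd (f A))) \<and>
     (\<forall>A\<in>L. \<forall>B\<in>L. f (commutator A B) =
        (commutator (fst (f A)) (fst (f B)), commutator (snd (f A)) (snd (f B))))"

end

theory Submission
  imports Defs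
begin

text \<open>Pauli strings multiply symbolically: \<open>\<sigma>_P \<sigma>_Q\<close> is a phase times \<open>\<sigma>_(P Q)\<close>, so the bracket
  \<open>[i \<sigma>_P, i \<sigma>_Q]\<close> vanishes if \<open>P\<close> and \<open>Q\<close> commute and is a nonzero real multiple of
  \<open>i \<sigma>_(P Q)\<close> if they anticommute. Hence the real span of the strings commuting with \<open>X\<^sup>\<otimes>\<^sup>n\<close>
  (other than \<open>I\<^sup>\<otimes>\<^sup>n\<close> and \<open>X\<^sup>\<otimes>\<^sup>n\<close>) is a Lie algebra containing the generators of
  \<open>a13 n\<close>. Conversely every such string arises from the generators by multiplying
  anticommuting pairs: by explicit products for \<open>n = 3\<close>, and by induction on \<open>n\<close> using strings
  padded with an identity factor at either end.

  Expanding in the Pauli basis, the span consists exactly of the traceless skew-Hermitian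
  matrices \<open>A\<close> commuting with \<open>J = X\<^sup>\<otimes>\<^sup>n\<close> and with \<open>tr (A J) = 0\<close>. In the \<open>\<plusminus>1\<close>
  eigenspaces of \<open>J\<close> such an \<open>A\<close> is block diagonal, with two independent traceless
  skew-Hermitian blocks of size \<open>2\<^sup>n\<^sup>-\<^sup>1\<close>.\<close>

section \<open>Symbolic multiplication of Pauli strings\<close>

lemma UNIV_pauli: "(UNIV::pauli set) = {PI, PX, PY, PZ}"
  using pauli.exhaust by auto

instance pauli :: finite by standard (simp add: UNIV_pauli)

text \<open>The tables encode \<open>\<sigma>_a \<sigma>_b = pauli_phase a b \<cdot> \<sigma>_(pauli_mul a b)\<close>.\<close>

fun pauli_mul :: "pauli \<Rightarrow> pauli \<Rightarrow> pauli" where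
  "pauli_mul PI b = b" | "pauli_mul a PI = a"
| "pauli_mul PX PX = PI" | "pauli_mul PX PY = PZ" | "pauli_mul PX PZ = PY"
| "pauli_mul PY PX = PZ" | "pauli_mul PY PY = PI" | "pauli_mul PY PZ = PX"
| "pauli_mul PZ PX = PY" | "pauli_mul PZ PY = PX" | "pauli_mul PZ PZ = PI"

fun pauli_phase :: "pauli \<Rightarrow> pauli \<Rightarrow> complex" where
  "pauli_phase PX PY = \<i>" | "pauli_phase PY PX = - \<i>"
| "pauli_phase PY PZ = \<i>" | "pauli_phase PZ PY = - \<i>"
| "pauli_phase PZ PX = \<i>" | "pauli_phase PX PZ = - \<i>"
| "pauli_phase _ _ = 1"

definition anticomm1 :: "pauli \<Rightarrow> pauli \<Rightarrow> bool" where
  "anticomm1 a b \<longleftrightarrow> a \<noteq> PI \<and> b \<noteq> PI \<and> a \<noteq> b"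

definition anticomm_X :: "pauli \<Rightarrow> bool" where
  "anticomm_X a \<longleftrightarrow> a = PY \<or> a = PZ"

definition string_mul :: "pauli list \<Rightarrow> pauli list \<Rightarrow> pauli list" where
  "string_mul P Q = map2 pauli_mul P Q"

fun string_phase :: "pauli list \<Rightarrow> pauli list \<Rightarrow> complex" where
  "string_phase (a # P) (b # Q) = pauli_phase a b * string_phase P Q"
| "string_phase _ _ = 1"

fun anticomm :: "pauli list \<Rightarrow> pauli list \<Rightarrow> bool" where
  "anticomm (a # P) (b # Q) = (anticomm1 a b \<noteq> anticomm P Q)"
| "anticomm _ _ = False"

fun anticomm_Xn :: "pauli list \<Rightarrow> bool" where
  "anticomm_Xn [] = False"
| "anticomm_Xn (a # P) = (anticomm_X a \<noteq> anticomm_Xn P)"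

lemma pauli_mul_I_right [simp]: "pauli_mul a PI = a"
  by (cases a) auto

lemma pauli_mul_self [simp]: "pauli_mul a a = PI"
  by (cases a) auto

lemma pauli_mul_comm: "pauli_mul a b = pauli_mul b a"
  by (cases a; cases b) auto

lemma pauli_mul_cancel: "pauli_mul p (pauli_mul p q) = q"
  by (cases p; cases q) auto

lemma anticomm1_sym: "anticomm1 a b = anticomm1 b a"
  by (auto simp: anticomm1_def)

lemma anticomm1_pauli_mul: "anticomm1 p (pauli_mul q r) = (anticomm1 p q \<noteq> anticomm1 p r)"
  by (cases p; cases q; cases r) (auto simp: anticomm1_def)

lemma pauli_phase_swap: "pauli_phase b a = (if anticomm1 a b then -1 else 1) * pauli_phase a b"
  by (cases a; cases b) (auto simp: anticomm1_def)

lemma pauli_phase_cnj: "cnj (pauli_phase a b) = pauli_phase b a"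
  by (cases a; cases b) auto

lemma pauli_phase_nonzero: "pauli_phase a b \<noteq> 0"
  by (cases a; cases b) auto

lemma string_mul_Cons [simp]: "string_mul (a # P) (b # Q) = pauli_mul a b # string_mul P Q"
  by (simp add: string_mul_def)

lemma string_mul_Nil [simp]: "string_mul [] Q = []" "string_mul P [] = []"
  by (auto simp: string_mul_def)

lemma length_string_mul [simp]: "length (string_mul P Q) = min (length P) (length Q)"
  by (simp add: string_mul_def)

lemma string_mul_append:
  "length P = length Q \<Longrightarrow> string_mul (P @ P') (Q @ Q') = string_mul P Q @ string_mul P' Q'"
  by (simp add: string_mul_def)

lemma string_mul_replicate:
  "string_mul (replicate k a) (replicate k b) = replicate k (pauli_mul a b)"
  by (induction k) auto

lemma string_mul_comm: "string_mul P Q = string_mul Q P"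
proof (induction P arbitrary: Q)
  case (Cons a P)
  then show ?case by (cases Q) (auto simp: pauli_mul_comm)
qed simp

lemma string_mul_self: "string_mul P P = replicate (length P) PI"
  by (induction P) auto

lemma string_mul_cancel: "length P = length Q \<Longrightarrow> string_mul P (string_mul P Q) = Q"
proof (induction P arbitrary: Q)
  case (Cons a P)
  then show ?case by (cases Q) (auto simp: pauli_mul_cancel)
qed simp

lemma string_mul_cancel_right: "length M = length g \<Longrightarrow> string_mul (string_mul M g) g = M"
  by (metis string_mul_comm string_mul_cancel length_string_mul min.idem)

lemma string_mul_I_right: "string_mul P (replicate (length P) PI) = P"
  by (induction P) auto

lemma string_phase_swap:
  "length P = length Q \<Longrightarrow> string_phase Q P = (if anticomm P Q then -1 else 1) * string_phase P Q"
proof (induction P arbitrary: Q)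
  case (Cons a P)
  then obtain b Q' where "Q = b # Q'" "length P = length Q'"
    by (cases Q) auto
  with Cons.IH[of Q'] show ?case
    by (simp add: pauli_phase_swap[of a b] anticomm1_sym[of a b])
qed simp

lemma string_phase_cnj: "cnj (string_phase P Q) = string_phase Q P"
  by (induction P Q rule: string_phase.induct) (auto simp: pauli_phase_cnj)

lemma string_phase_nonzero: "string_phase P Q \<noteq> 0"
  by (induction P Q rule: string_phase.induct) (auto simp: pauli_phase_nonzero)

lemma string_phase_self: "string_phase P P = 1"
  by (induction P) (auto, case_tac a, auto)

lemma cnj_eq_uminus_imaginary: "cnj z = - z \<Longrightarrow> z = \<i> * complex_of_real (Im z)"
  by (simp add: complex_eq_iff)

lemma string_phase_anticomm_imaginary:
  assumes "length P = length Q" "anticomm P Q"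
  shows "string_phase P Q = \<i> * complex_of_real (Im (string_phase P Q))"
  using string_phase_cnj[of P Q] string_phase_swap[OF assms(1)] assms(2)
  by (intro cnj_eq_uminus_imaginary) simp

lemma anticomm_sym: "anticomm P Q = anticomm Q P"
  by (induction P Q rule: anticomm.induct) (auto simp: anticomm1_sym)

lemma anticomm_self [simp]: "\<not> anticomm P P"
  by (induction P) (auto simp: anticomm1_def)

lemma anticomm_string_mul:
  "length Q = length R \<Longrightarrow> anticomm P (string_mul Q R) = (anticomm P Q \<noteq> anticomm P R)"
proof (induction P arbitrary: Q R)
  case (Cons a P)
  then show ?case by (cases Q; cases R) (auto simp: anticomm1_pauli_mul)
qed simp

lemma anticomm_append:
  "length P = length Q \<Longrightarrow> anticomm (P @ P') (Q @ Q') = (anticomm P Q \<noteq> anticomm P' Q')"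
proof (induction P arbitrary: Q)
  case (Cons a P)
  then show ?case by (cases Q) auto
qed simp

lemma anticomm_replicate:
  "anticomm (replicate k a) (replicate k b) = (odd k \<and> anticomm1 a b)"
  by (induction k) auto

lemma anticomm_I_right [simp]: "\<not> anticomm P (replicate (length P) PI)"
  by (induction P) (auto simp: anticomm1_def)

lemma anticomm_Xn_iff_anticomm: "anticomm_Xn P = anticomm P (replicate (length P) PX)"
proof (induction P)
  case (Cons a P)
  then show ?case by (cases a) (auto simp: anticomm1_def anticomm_X_def)
qed simp

lemma anticomm_Xn_append: "anticomm_Xn (P @ Q) = (anticomm_Xn P \<noteq> anticomm_Xn Q)"
  by (induction P) auto

lemma anticomm_Xn_string_mul:
  "length P = length Q \<Longrightarrow> anticomm_Xn (string_mul P Q) = (anticomm_Xn P \<noteq> anticomm_Xn Q)"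
proof (induction P arbitrary: Q)
  case (Cons a P)
  then show ?case
    by (cases Q) (auto, (case_tac a; case_tac aa; simp add: anticomm_X_def)+)
qed simp

lemma anticomm_Xn_replicate_I [simp]: "\<not> anticomm_Xn (replicate k PI)"
  by (induction k) (auto simp: anticomm_X_def)

lemma anticomm_Xn_replicate_X [simp]: "\<not> anticomm_Xn (replicate k PX)"
  by (induction k) (auto simp: anticomm_X_def)

lemma less_2_cases: "(a::nat) < 2 \<Longrightarrow> a = 0 \<or> a = 1" by auto

lemma sum_lessThan_2: "(\<Sum>x<(2::nat). f x) = f 0 + f 1"
  by (simp add: numeral_2_eq_2)

lemma sum_lessThan_double: "(\<Sum>k<2*(N::nat). f k) = (\<Sum>k<N. f k) + (\<Sum>k<N. f (N + k)::'a::comm_monoid_add)"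
proof -
  have "{..<2*N} = {..<N} \<union> {N..<N+N}" by auto
  then have "(\<Sum>k<2*N. f k) = (\<Sum>k<N. f k) + sum f {0+N..<N+N}"
    by (simp add: sum.union_disjoint ivl_disj_int)
  also have "sum f {0+N..<N+N} = (\<Sum>k<N. f (N + k))"
    by (subst sum.shift_bounds_nat_ivl) (simp add: atLeast0LessThan add.commute)
  finally show ?thesis .
qed

lemma sum_lessThan_double_blocks: "(\<Sum>k<2*(N::nat). f k) = (\<Sum>x<2. \<Sum>k<N. f (x * N + k)::'a::comm_monoid_add)"
  by (simp add: sum_lessThan_double sum_lessThan_2)

lemma div_mod_block: "k < (N::nat) \<Longrightarrow> (x * N + k) div N = x" "k < N \<Longrightarrow> (x * N + k) mod N = k"
  by auto

lemma div_less_2: "r < 2 * (N::nat) \<Longrightarrow> r div N < 2"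
  by (simp add: less_mult_imp_div_less)

lemma eq_iff_div_mod_eq: "0 < (N::nat) \<Longrightarrow> (r = c) = (r div N = c div N \<and> r mod N = c mod N)"
  by (metis div_mult_mod_eq)

lemma reverse_div: assumes "r < 2 * (N::nat)" shows "(2*N - 1 - r) div N = 1 - r div N"
proof (cases "r < N")
  case True
  define m where "m = N - 1 - r"
  have m: "m < N" using True by (simp add: m_def)
  have e: "2*N - 1 - r = N + m" using True by (simp add: m_def)
  have "(N + m) div N = 1" using m by simp
  then show ?thesis using True by (simp only: e) (simp add: m_def)
next
  case False
  then have "2*N - 1 - r < N" using assms by simp
  then show ?thesis using False assms by (simp add: div_less_2 le_div_geq)
qed

lemma reverse_mod: assumes "r < 2 * (N::nat)" shows "(2*N - 1 - r) mod N = N - 1 - r mod N"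
proof (cases "r < N")
  case True
  define m where "m = N - 1 - r"
  have m: "m < N" using True by (simp add: m_def)
  have e: "2*N - 1 - r = N + m" using True by (simp add: m_def)
  have "(N + m) mod N = m" using m by simp
  then show ?thesis using True by (simp only: e) (simp add: m_def)
next
  case False
  then have "2*N - 1 - r < N" using assms by simp
  moreover have "r mod N = r - N" using False assms by (simp add: le_mod_geq)
  ultimately show ?thesis using False assms by simp
qed

lemma index_mult_mat_sum:
  "A \<in> carrier_mat n m \<Longrightarrow> B \<in> carrier_mat m p \<Longrightarrow> i < n \<Longrightarrow> j < p \<Longrightarrow>
   (A * B) $$ (i,j) = (\<Sum>k<m. A $$ (i,k) * B $$ (k,j))"
  by (simp add: scalar_prod_def atLeast0LessThan)

lemma qbit_mod: "k < n \<Longrightarrow> (r mod 2^n) div 2^k mod 2 = (r::nat) div 2^k mod 2"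
  by (metis bit_iff_odd bit_take_bit_iff take_bit_eq_mod odd_iff_mod_2_eq_one mod2_eq_if)

lemma qbit_Suc0: "r < 2 * 2^n \<Longrightarrow> qbit (Suc n) 0 r = r div 2^n"
  unfolding qbit_def by (simp add: less_mult_imp_div_less)

lemma qbit_SucSuc: "j < n \<Longrightarrow> qbit (Suc n) (Suc j) r = qbit n j (r mod 2^n)"
  unfolding qbit_def by (simp add: qbit_mod)

lemma pauli_mat_dim[simp]:
  "dim_row (pauli_mat P) = 2 ^ length P" "dim_col (pauli_mat P) = 2 ^ length P"
  unfolding pauli_mat_def Let_def by auto

lemma pauli_mat_carrier: "pauli_mat P \<in> carrier_mat (2 ^ length P) (2 ^ length P)"
  by auto

lemma pauli_mat_Nil: "pauli_mat [] = 1\<^sub>m 1"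
  by (rule eq_matI) (auto simp: pauli_mat_def)

lemma pauli_mat_Cons:
  assumes "r < 2 * 2^length P" "c < 2 * 2^length P"
  shows "pauli_mat (a#P) $$ (r,c) = pauli_entry a (r div 2^length P) (c div 2^length P)
           * pauli_mat P $$ (r mod 2^length P, c mod 2^length P)"
proof -
  let ?n = "length P"
  have "pauli_mat (a#P) $$ (r,c) = (\<Prod>j<Suc ?n. pauli_entry ((a#P) ! j) (qbit (Suc ?n) j r) (qbit (Suc ?n) j c))"
    using assms by (simp add: pauli_mat_def)
  also have "\<dots> = pauli_entry a (qbit (Suc ?n) 0 r) (qbit (Suc ?n) 0 c) *
     (\<Prod>j<?n. pauli_entry (P ! j) (qbit (Suc ?n) (Suc j) r) (qbit (Suc ?n) (Suc j) c))"
    by (subst prod.lessThan_Suc_shift) simp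
  also have "(\<Prod>j<?n. pauli_entry (P ! j) (qbit (Suc ?n) (Suc j) r) (qbit (Suc ?n) (Suc j) c))
     = (\<Prod>j<?n. pauli_entry (P ! j) (qbit ?n j (r mod 2^?n)) (qbit ?n j (c mod 2^?n)))"
    by (rule prod.cong) (auto simp: qbit_SucSuc)
  also have "\<dots> = pauli_mat P $$ (r mod 2^?n, c mod 2^?n)"
    by (simp add: pauli_mat_def Let_def)
  finally show ?thesis using assms by (simp add: qbit_Suc0)
qed

lemma pauli_entry_mult:
  assumes "a < 2" "b < 2"
  shows "(\<Sum>x<2. pauli_entry s a x * pauli_entry t x b) = pauli_phase s t * pauli_entry (pauli_mul s t) a b"
  using less_2_cases[OF assms(1)] less_2_cases[OF assms(2)]
  by (cases s; cases t) (auto simp: sum_lessThan_2)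

lemma pauli_mat_mult_entry:
  "length P = length Q \<Longrightarrow> r < 2^length P \<Longrightarrow> c < 2^length P \<Longrightarrow>
   (\<Sum>k<2^length P. pauli_mat P $$ (r,k) * pauli_mat Q $$ (k,c)) = string_phase P Q * pauli_mat (string_mul P Q) $$ (r,c)"
proof (induction P arbitrary: Q r c)
  case Nil
  then show ?case by (simp add: pauli_mat_Nil)
next
  case (Cons a P')
  obtain b Q' where Q: "Q = b # Q'" using Cons.prems(1) by (cases Q) auto
  have len: "length Q' = length P'" using Cons.prems(1) Q by simp
  define N where "N = (2::nat) ^ length P'"
  have N0: "N > 0" by (simp add: N_def)
  have len2N: "2^length (a#P') = 2 * N" by (simp add: N_def)
  have r: "r < 2 * N" and c: "c < 2 * N" using Cons.prems(2,3) by (auto simp: N_def)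
  have "(\<Sum>k<2^length (a#P'). pauli_mat (a#P') $$ (r,k) * pauli_mat Q $$ (k,c))
      = (\<Sum>x<2. \<Sum>k<N. pauli_mat (a#P') $$ (r,x*N+k) * pauli_mat (b#Q') $$ (x*N+k,c))"
    unfolding Q using sum_lessThan_double_blocks[where N=N] by (simp only: len2N)
  also have "\<dots> = (\<Sum>x<2. \<Sum>k<N. (pauli_entry a (r div N) x * pauli_entry b x (c div N)) *
        (pauli_mat P' $$ (r mod N, k) * pauli_mat Q' $$ (k, c mod N)))"
  proof (rule sum.cong[OF refl], rule sum.cong[OF refl])
    fix x k assume x: "x \<in> {..<(2::nat)}" and k: "k \<in> {..<N}"
    have xk: "x * N + k < 2 * N" using less_2_cases[of x] x k by auto
    show "pauli_mat (a#P') $$ (r,x*N+k) * pauli_mat (b#Q') $$ (x*N+k,c) =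
        (pauli_entry a (r div N) x * pauli_entry b x (c div N)) *
        (pauli_mat P' $$ (r mod N, k) * pauli_mat Q' $$ (k, c mod N))"
      using k xk r c len by (simp add: pauli_mat_Cons N_def[symmetric] div_mod_block)
  qed
  also have "\<dots> = (\<Sum>x<2. pauli_entry a (r div N) x * pauli_entry b x (c div N)) *
        (\<Sum>k<N. pauli_mat P' $$ (r mod N, k) * pauli_mat Q' $$ (k, c mod N))"
    by (simp add: sum_product)
  also have "\<dots> = (pauli_phase a b * pauli_entry (pauli_mul a b) (r div N) (c div N)) *
        (string_phase P' Q' * pauli_mat (string_mul P' Q') $$ (r mod N, c mod N))"
    using Cons.IH[OF len[symmetric], of "r mod N" "c mod N"] pauli_entry_mult div_less_2[OF r] div_less_2[OF c] N0
    by (simp add: N_def)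
  also have "\<dots> = string_phase (a#P') Q * pauli_mat (string_mul (a#P') Q) $$ (r,c)"
    using r c len by (simp add: Q pauli_mat_Cons N_def[symmetric])
  finally show ?case .
qed

lemma pauli_mat_mult:
  assumes "length P = length Q"
  shows "pauli_mat P * pauli_mat Q = string_phase P Q \<cdot>\<^sub>m pauli_mat (string_mul P Q)"
proof (rule eq_matI)
  fix i j
  assume "i < dim_row (string_phase P Q \<cdot>\<^sub>m pauli_mat (string_mul P Q))"
    and "j < dim_col (string_phase P Q \<cdot>\<^sub>m pauli_mat (string_mul P Q))"
  then have ij: "i < 2^length P" "j < 2^length P"
    using assms by (simp_all del: power_strict_increasing_iff)
  have "pauli_mat Q \<in> carrier_mat (2^length P) (2^length P)"
    using assms pauli_mat_carrier[of Q] by simp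
  then show "(pauli_mat P * pauli_mat Q) $$ (i,j) = (string_phase P Q \<cdot>\<^sub>m pauli_mat (string_mul P Q)) $$ (i,j)"
    using ij assms pauli_mat_mult_entry[OF assms ij]
    by (simp add: index_mult_mat_sum[OF pauli_mat_carrier] del: index_mult_mat)
qed (use assms in simp_all)

lemma pauli_mat_I: "pauli_mat (replicate n PI) = 1\<^sub>m (2^n)"
proof (induction n)
  case 0 then show ?case by (simp add: pauli_mat_Nil)
next
  case (Suc n)
  show ?case
  proof (rule eq_matI)
    fix i j assume "i < dim_row (1\<^sub>m (2 ^ Suc n) :: complex mat)" "j < dim_col (1\<^sub>m (2 ^ Suc n) :: complex mat)"
    then have ij: "i < 2 * 2^n" "j < 2 * 2^n" by simp_all
    have "pauli_mat (replicate (Suc n) PI) $$ (i,j) =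
       pauli_entry PI (i div 2^n) (j div 2^n) * pauli_mat (replicate n PI) $$ (i mod 2^n, j mod 2^n)"
      using ij pauli_mat_Cons[of i "replicate n PI" j PI] by simp
    also have "\<dots> = (if i = j then 1 else 0)"
      using Suc eq_iff_div_mod_eq[of "2^n" i j] by simp
    finally show "pauli_mat (replicate (Suc n) PI) $$ (i,j) = 1\<^sub>m (2 ^ Suc n) $$ (i,j)"
      using ij by simp
  qed simp_all
qed

lemma pauli_mat_sq: "pauli_mat P * pauli_mat P = 1\<^sub>m (2 ^ length P)"
proof -
  have "(1::complex) \<cdot>\<^sub>m (1\<^sub>m (2 ^ length P)) = 1\<^sub>m (2 ^ length P)" by (rule eq_matI) auto
  then show ?thesis using pauli_mat_mult[of P P] by (simp add: string_phase_self string_mul_self pauli_mat_I)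
qed

lemma pauli_mat_nonzero_entry: "\<exists>r<2^length P. \<exists>c<2^length P. pauli_mat P $$ (r,c) \<noteq> 0"
proof (rule ccontr)
  assume "\<not> ?thesis"
  then have z: "\<And>r c. r<2^length P \<Longrightarrow> c<2^length P \<Longrightarrow> pauli_mat P $$ (r,c) = 0" by auto
  have "(pauli_mat P * pauli_mat P) $$ (0,0) = 0"
    by (subst index_mult_mat_sum[OF pauli_mat_carrier pauli_mat_carrier]) (auto simp: z)
  then show False using pauli_mat_sq[of P] by simp
qed

lemma pauli_entry_herm: "a < 2 \<Longrightarrow> b < 2 \<Longrightarrow> cnj (pauli_entry s b a) = pauli_entry s a b"
  using less_2_cases[of a] less_2_cases[of b] by (cases s) auto

lemma pauli_mat_herm:
  "r < 2^length P \<Longrightarrow> c < 2^length P \<Longrightarrow> cnj (pauli_mat P $$ (c,r)) = pauli_mat P $$ (r,c)"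
proof (induction P arbitrary: r c)
  case Nil then show ?case by (simp add: pauli_mat_Nil)
next
  case (Cons a P)
  have r: "r < 2 * 2^length P" and c: "c < 2 * 2^length P" using Cons.prems by simp_all
  show ?case
    using r c Cons.IH[of "r mod 2^length P" "c mod 2^length P"] div_less_2[OF r] div_less_2[OF c]
    by (simp add: pauli_mat_Cons pauli_entry_herm)
qed

lemma smult_pauli_mat_mult:
  assumes "length P = length Q"
  shows "(\<i> \<cdot>\<^sub>m pauli_mat P) * (\<i> \<cdot>\<^sub>m pauli_mat Q) = (- string_phase P Q) \<cdot>\<^sub>m pauli_mat (string_mul P Q)"
proof -
  have cq: "pauli_mat Q \<in> carrier_mat (2^length P) (2^length P)" using assms pauli_mat_carrier[of Q] by simp
  have "(\<i> \<cdot>\<^sub>m pauli_mat P) * (\<i> \<cdot>\<^sub>m pauli_mat Q) = \<i> \<cdot>\<^sub>m (\<i> \<cdot>\<^sub>m (pauli_mat P * pauli_mat Q))"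
    using mult_smult_assoc_mat[OF pauli_mat_carrier[of P] smult_carrier_mat[OF cq], of \<i> \<i>]
          mult_smult_distrib[OF pauli_mat_carrier[of P] cq, of \<i>] by simp
  also have "\<dots> = (- string_phase P Q) \<cdot>\<^sub>m pauli_mat (string_mul P Q)"
    unfolding pauli_mat_mult[OF assms] by (rule eq_matI) auto
  finally show ?thesis .
qed

lemma commutator_pauli_mat:
  assumes "length P = n" "length Q = n"
  shows "commutator (\<i> \<cdot>\<^sub>m pauli_mat P) (\<i> \<cdot>\<^sub>m pauli_mat Q) =
    (if anticomm P Q then complex_of_real (-2 * Im (string_phase P Q)) \<cdot>\<^sub>m (\<i> \<cdot>\<^sub>m pauli_mat (string_mul P Q))
     else 0\<^sub>m (2^n) (2^n))"
proof -
  have l: "length P = length Q" using assms by simp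
  have c: "commutator (\<i> \<cdot>\<^sub>m pauli_mat P) (\<i> \<cdot>\<^sub>m pauli_mat Q) =
     (- string_phase P Q) \<cdot>\<^sub>m pauli_mat (string_mul P Q) - (- string_phase Q P) \<cdot>\<^sub>m pauli_mat (string_mul P Q)"
    unfolding commutator_def smult_pauli_mat_mult[OF l] smult_pauli_mat_mult[OF l[symmetric]]
    by (simp add: string_mul_comm)
  show ?thesis
  proof (cases "anticomm P Q")
    case True
    have "string_phase Q P = - string_phase P Q" using string_phase_swap[OF l] True by simp
    moreover have "string_phase P Q = \<i> * complex_of_real (Im (string_phase P Q))" using string_phase_anticomm_imaginary[OF l True] .
    ultimately show ?thesis using True assms unfolding c
      by (intro eq_matI) (auto simp: algebra_simps)
  next
    case False
    have "string_phase Q P = string_phase P Q" using string_phase_swap[OF l] False by simp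
    then show ?thesis using False assms unfolding c
      by (intro eq_matI) auto
  qed
qed

lemma commutator_string_mul:
  assumes l: "length P = n" "length Q = n" and PQ: "anticomm P Q"
  shows "\<i> \<cdot>\<^sub>m pauli_mat (string_mul P Q) =
    complex_of_real (-1 / (2 * Im (string_phase P Q))) \<cdot>\<^sub>m commutator (\<i> \<cdot>\<^sub>m pauli_mat P) (\<i> \<cdot>\<^sub>m pauli_mat Q)"
proof -
  have "Im (string_phase P Q) \<noteq> 0"
    using string_phase_anticomm_imaginary[OF _ PQ] string_phase_nonzero[of P Q] l by force
  then show ?thesis
    unfolding commutator_pauli_mat[OF l] using PQ by (intro eq_matI) auto
qed

lemma pauli_entry_flip: "a < 2 \<Longrightarrow> b < 2 \<Longrightarrow>
  pauli_entry s (1-a) (1-b) = (if anticomm_X s then -1 else 1) * pauli_entry s a b"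
  using less_2_cases[of a] less_2_cases[of b] by (cases s) (auto simp: anticomm_X_def)

lemma pauli_mat_flip:
  "r < 2^length P \<Longrightarrow> c < 2^length P \<Longrightarrow>
   pauli_mat P $$ (2^length P - 1 - r, 2^length P - 1 - c) = (if anticomm_Xn P then -1 else 1) * pauli_mat P $$ (r,c)"
proof (induction P arbitrary: r c)
  case Nil then show ?case by (simp add: pauli_mat_Nil)
next
  case (Cons a P)
  define N where "N = (2::nat)^length P"
  have r: "r < 2 * N" and c: "c < 2 * N" using Cons.prems by (simp_all add: N_def)
  have e: "2^length (a#P) - 1 - r = 2 * N - 1 - r" "2^length (a#P) - 1 - c = 2 * N - 1 - c" by (simp_all add: N_def)
  have "pauli_mat (a#P) $$ (2 * N - 1 - r, 2 * N - 1 - c) =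
        pauli_entry a (1 - r div N) (1 - c div N) * pauli_mat P $$ (N - 1 - r mod N, N - 1 - c mod N)"
    using pauli_mat_Cons[of "2 * N - 1 - r" P "2 * N - 1 - c" a] r c
      reverse_div[OF r] reverse_mod[OF r] reverse_div[OF c] reverse_mod[OF c]
    by (simp add: N_def[symmetric])
  also have "\<dots> = (if anticomm_X a then -1 else 1) * pauli_entry a (r div N) (c div N) *
      ((if anticomm_Xn P then -1 else 1) * pauli_mat P $$ (r mod N, c mod N))"
    using pauli_entry_flip[OF div_less_2[OF r] div_less_2[OF c], of a] Cons.IH[of "r mod N" "c mod N"]
    by (simp add: N_def)
  also have "\<dots> = (if anticomm_Xn (a#P) then -1 else 1) * pauli_mat (a#P) $$ (r,c)"
    using pauli_mat_Cons[of r P c a] r c by (simp add: N_def[symmetric])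
  finally show ?case unfolding e .
qed

lemma trace_pauli_mat:
  "P \<noteq> replicate (length P) PI \<Longrightarrow> (\<Sum>r<2^length P. pauli_mat P $$ (r,r)) = 0"
proof (induction P)
  case Nil then show ?case by simp
next
  case (Cons a P)
  define N where "N = (2::nat)^length P"
  have e: "2^length (a#P) = 2 * N" by (simp add: N_def)
  have "(\<Sum>r<2^length (a#P). pauli_mat (a#P) $$ (r,r)) = (\<Sum>x<2. \<Sum>k<N. pauli_mat (a#P) $$ (x*N+k, x*N+k))"
    unfolding e by (rule sum_lessThan_double_blocks)
  also have "\<dots> = (\<Sum>x<2. \<Sum>k<N. pauli_entry a x x * pauli_mat P $$ (k,k))"
  proof (intro sum.cong refl)
    fix x k assume "x \<in> {..<(2::nat)}" "k \<in> {..<N}"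
    then have "x * N + k < 2 * N" "k < N" using less_2_cases[of x] by auto
    then show "pauli_mat (a#P) $$ (x*N+k, x*N+k) = pauli_entry a x x * pauli_mat P $$ (k,k)"
      using pauli_mat_Cons[of "x*N+k" P "x*N+k" a] by (simp add: N_def[symmetric] div_mod_block)
  qed
  also have "\<dots> = (\<Sum>x<2. pauli_entry a x x) * (\<Sum>k<N. pauli_mat P $$ (k,k))"
    by (rule sum_product[symmetric])
  also have "\<dots> = 0"
  proof (cases "a = PI")
    case True
    then have "P \<noteq> replicate (length P) PI" using Cons.prems by simp
    then show ?thesis using Cons.IH by (simp add: N_def)
  next
    case False
    then show ?thesis by (cases a) (auto simp: sum_lessThan_2)
  qed
  finally show ?case .
qed

lemma antitrace_pauli_mat:
  "P \<noteq> replicate (length P) PX \<Longrightarrow> (\<Sum>r<2^length P. pauli_mat P $$ (r, 2^length P - 1 - r)) = 0"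
proof (induction P)
  case Nil then show ?case by simp
next
  case (Cons a P)
  define N where "N = (2::nat)^length P"
  have e: "2^length (a#P) = 2 * N" by (simp add: N_def)
  have "(\<Sum>r<2^length (a#P). pauli_mat (a#P) $$ (r, 2^length (a#P) - 1 - r)) =
      (\<Sum>x<2. \<Sum>k<N. pauli_mat (a#P) $$ (x*N+k, 2*N - 1 - (x*N+k)))"
    unfolding e by (rule sum_lessThan_double_blocks)
  also have "\<dots> = (\<Sum>x<2. \<Sum>k<N. pauli_entry a x (1 - x) * pauli_mat P $$ (k, N - 1 - k))"
  proof (intro sum.cong refl)
    fix x k assume "x \<in> {..<(2::nat)}" "k \<in> {..<N}"
    then have xk: "x * N + k < 2 * N" "k < N" using less_2_cases[of x] by auto
    then show "pauli_mat (a#P) $$ (x*N+k, 2*N - 1 - (x*N+k)) = pauli_entry a x (1 - x) * pauli_mat P $$ (k, N - 1 - k)"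
      using pauli_mat_Cons[of "x*N+k" P "2*N - 1 - (x*N+k)" a] reverse_div[OF xk(1)] reverse_mod[OF xk(1)]
      by (simp add: N_def[symmetric] div_mod_block)
  qed
  also have "\<dots> = (\<Sum>x<2. pauli_entry a x (1-x)) * (\<Sum>k<N. pauli_mat P $$ (k, N - 1 - k))"
    by (rule sum_product[symmetric])
  also have "\<dots> = 0"
  proof (cases "a = PX")
    case True
    then have "P \<noteq> replicate (length P) PX" using Cons.prems by simp
    then show ?thesis using Cons.IH by (simp add: N_def)
  next
    case False
    then show ?thesis by (cases a) (auto simp: sum_lessThan_2)
  qed
  finally show ?case .
qed

lemma pauli_mat_X:
  "r < 2^n \<Longrightarrow> c < 2^n \<Longrightarrow> pauli_mat (replicate n PX) $$ (r,c) = (if c = 2^n - 1 - r then 1 else 0)"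
proof (induction n arbitrary: r c)
  case 0 then show ?case by (simp add: pauli_mat_Nil)
next
  case (Suc n)
  define N where "N = (2::nat)^n"
  have r: "r < 2 * N" and c: "c < 2 * N" using Suc.prems by (simp_all add: N_def)
  have N0: "N > 0" by (simp add: N_def)
  have "pauli_mat (replicate (Suc n) PX) $$ (r,c) =
     pauli_entry PX (r div N) (c div N) * pauli_mat (replicate n PX) $$ (r mod N, c mod N)"
    using pauli_mat_Cons[of r "replicate n PX" c PX] r c by (simp add: N_def)
  also have "\<dots> = (if c div N = 1 - r div N \<and> c mod N = N - 1 - r mod N then 1 else 0)"
    using Suc.IH[of "r mod N" "c mod N"] N0 less_2_cases[OF div_less_2[OF r]] less_2_cases[OF div_less_2[OF c]]
    by (auto simp: N_def)
  also have "(c div N = 1 - r div N \<and> c mod N = N - 1 - r mod N) = (c = 2 * N - 1 - r)"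
    using eq_iff_div_mod_eq[OF N0, of c "2*N - 1 - r"] reverse_div[OF r] reverse_mod[OF r] by simp
  finally show ?case by (simp add: N_def)
qed

abbreviation Xn :: "nat \<Rightarrow> complex mat" where "Xn n \<equiv> pauli_mat (replicate n PX)"

lemma Xn_carrier: "Xn n \<in> carrier_mat (2^n) (2^n)"
  using pauli_mat_carrier[of "replicate n PX"] by simp

lemma mult_X_right:
  assumes A: "A \<in> carrier_mat (2^n) (2^n)" and r: "r < 2^n" and c: "c < 2^n"
  shows "(A * Xn n) $$ (r,c) = A $$ (r, 2^n - 1 - c)"
proof -
  have "(A * Xn n) $$ (r,c) = (\<Sum>k<2^n. A $$ (r,k) * Xn n $$ (k,c))"
    by (rule index_mult_mat_sum[OF A Xn_carrier r c])
  also have "\<dots> = (\<Sum>k<2^n. if k = 2^n - 1 - c then A $$ (r,k) else 0)"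
    by (rule sum.cong) (use c in \<open>auto simp: pauli_mat_X\<close>)
  also have "\<dots> = A $$ (r, 2^n - 1 - c)"
    by (simp add: sum.delta)
  finally show ?thesis .
qed

lemma mult_X_left:
  assumes A: "A \<in> carrier_mat (2^n) (2^n)" and r: "r < 2^n" and c: "c < 2^n"
  shows "(Xn n * A) $$ (r,c) = A $$ (2^n - 1 - r, c)"
proof -
  have "(Xn n * A) $$ (r,c) = (\<Sum>k<2^n. Xn n $$ (r,k) * A $$ (k,c))"
    by (rule index_mult_mat_sum[OF Xn_carrier A r c])
  also have "\<dots> = (\<Sum>k<2^n. if k = 2^n - 1 - r then A $$ (k,c) else 0)"
    by (rule sum.cong) (use r in \<open>auto simp: pauli_mat_X\<close>)
  also have "\<dots> = A $$ (2^n - 1 - r, c)"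
    by (simp add: sum.delta)
  finally show ?thesis .
qed

lemma pauli_mat_commute_Xn_iff:
  assumes "length P = n"
  shows "(pauli_mat P * Xn n = Xn n * pauli_mat P) \<longleftrightarrow> \<not> anticomm_Xn P"
proof
  assume eq: "pauli_mat P * Xn n = Xn n * pauli_mat P"
  have cP: "pauli_mat P \<in> carrier_mat (2^n) (2^n)" using assms pauli_mat_carrier[of P] by simp
  show "\<not> anticomm_Xn P"
  proof
    assume s: "anticomm_Xn P"
    obtain r c where rc: "r < 2^n" "c < 2^n" "pauli_mat P $$ (r,c) \<noteq> 0"
      using pauli_mat_nonzero_entry[of P] assms by auto
    define c' where "c' = 2^n - 1 - c"
    have c': "c' < 2^n" and cc: "2^n - 1 - c' = c" using rc by (auto simp: c'_def)
    have "(pauli_mat P * Xn n) $$ (r,c') = (Xn n * pauli_mat P) $$ (r,c')" using eq by simp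
    then have "pauli_mat P $$ (r, c) = pauli_mat P $$ (2^n - 1 - r, c')"
      using mult_X_right[OF cP rc(1) c'] mult_X_left[OF cP rc(1) c'] cc by simp
    also have "\<dots> = - pauli_mat P $$ (r, c)"
      using pauli_mat_flip[of r P c] rc s assms cc by (simp add: c'_def)
    finally have "pauli_mat P $$ (r, c) = 0" by simp
    with rc show False by simp
  qed
next
  assume s: "\<not> anticomm_Xn P"
  have cP: "pauli_mat P \<in> carrier_mat (2^n) (2^n)" using assms pauli_mat_carrier[of P] by simp
  show "pauli_mat P * Xn n = Xn n * pauli_mat P"
  proof (rule eq_matI)
    fix r c assume "r < dim_row (Xn n * pauli_mat P)" "c < dim_col (Xn n * pauli_mat P)"
    then have rc: "r < 2^n" "c < 2^n" using assms by simp_all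
    have c': "2^n - 1 - c < 2^n" and cc: "2^n - 1 - (2^n - 1 - c) = c" using rc by auto
    show "(pauli_mat P * Xn n) $$ (r,c) = (Xn n * pauli_mat P) $$ (r,c)"
      using mult_X_right[OF cP rc] mult_X_left[OF cP rc] pauli_mat_flip[of r P "2^n - 1 - c"] rc s assms cc
      by simp
  qed (use assms in simp_all)
qed

lemma commutator_carrier: "A \<in> carrier_mat N N \<Longrightarrow> B \<in> carrier_mat N N \<Longrightarrow> commutator A B \<in> carrier_mat N N"
  unfolding commutator_def by auto

lemma index_commutator:
  "A \<in> carrier_mat N N \<Longrightarrow> B \<in> carrier_mat N N \<Longrightarrow> i < N \<Longrightarrow> j < N \<Longrightarrow>
   commutator A B $$ (i,j) = (\<Sum>k<N. A $$ (i,k) * B $$ (k,j) - B $$ (i,k) * A $$ (k,j))"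
proof -
  assume a: "A \<in> carrier_mat N N" "B \<in> carrier_mat N N" "i < N" "j < N"
  have "(A*B) $$ (i,j) = (\<Sum>k<N. A $$ (i,k) * B $$ (k,j))" by (rule index_mult_mat_sum[OF a])
  moreover have "(B*A) $$ (i,j) = (\<Sum>k<N. B $$ (i,k) * A $$ (k,j))" by (rule index_mult_mat_sum[OF a(2,1,3,4)])
  ultimately show ?thesis unfolding commutator_def using a by (simp add: sum_subtractf)
qed

lemma commutator_add_left:
  assumes "A \<in> carrier_mat N N" "B \<in> carrier_mat N N" "C \<in> carrier_mat N N"
  shows "commutator (A + B) C = commutator A C + commutator B C"
proof (rule eq_matI)
  have ABc: "A + B \<in> carrier_mat N N" using assms by simp
  fix i j assume "i < dim_row (commutator A C + commutator B C)" "j < dim_col (commutator A C + commutator B C)"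
  then have ij: "i < N" "j < N" using assms commutator_carrier[of B N C] by auto
  show "commutator (A + B) C $$ (i,j) = (commutator A C + commutator B C) $$ (i,j)"
    using assms ij commutator_carrier[of A N C] commutator_carrier[of B N C]
    by (simp add: index_commutator[OF ABc assms(3) ij] index_commutator[OF assms(1,3) ij]
        index_commutator[OF assms(2,3) ij] sum.distrib[symmetric] algebra_simps)
qed (use assms commutator_carrier[of B N C] commutator_carrier[of "A+B" N C] in auto)

lemma commutator_smult_left:
  assumes "A \<in> carrier_mat N N" "C \<in> carrier_mat N N"
  shows "commutator (c \<cdot>\<^sub>m A) C = c \<cdot>\<^sub>m commutator A C"
proof (rule eq_matI)
  fix i j assume "i < dim_row (c \<cdot>\<^sub>m commutator A C)" "j < dim_col (c \<cdot>\<^sub>m commutator A C)"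
  then have ij: "i < N" "j < N" using assms commutator_carrier[of A N C] by auto
  show "commutator (c \<cdot>\<^sub>m A) C $$ (i,j) = (c \<cdot>\<^sub>m commutator A C) $$ (i,j)"
    using assms ij commutator_carrier[of A N C]
    by (simp add: index_commutator[OF smult_carrier_mat[OF assms(1)] assms(2) ij] index_commutator[OF assms ij]
        sum_distrib_left algebra_simps)
qed (use assms commutator_carrier[of A N C] commutator_carrier[of "c \<cdot>\<^sub>m A" N C] in auto)

lemma commutator_zero_left: assumes "C \<in> carrier_mat N N" shows "commutator (0\<^sub>m N N) C = 0\<^sub>m N N"
proof -
  have z: "0\<^sub>m N N \<in> carrier_mat N N" by simp
  have c: "commutator (0\<^sub>m N N) C \<in> carrier_mat N N" by (rule commutator_carrier[OF z assms])
  show ?thesis by (rule eq_matI) (use c in \<open>auto simp: index_commutator[OF z assms]\<close>)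
qed

lemma real_span_mat_carrier:
  "A \<in> real_span_mat N S \<Longrightarrow> S \<subseteq> carrier_mat N N \<Longrightarrow> A \<in> carrier_mat N N"
  by (induction rule: real_span_mat.induct) auto

lemma commutator_swap:
  assumes "A \<in> carrier_mat N N" "B \<in> carrier_mat N N"
  shows "commutator B A = complex_of_real (-1) \<cdot>\<^sub>m commutator A B"
  using assms by (intro eq_matI) (auto simp: commutator_def)

lemma real_span_mat_commutator_left:
  assumes S: "S \<subseteq> carrier_mat N N" and B: "B \<in> carrier_mat N N"
    and base: "\<And>x. x \<in> S \<Longrightarrow> commutator x B \<in> real_span_mat N S"
    and A: "A \<in> real_span_mat N S"
  shows "commutator A B \<in> real_span_mat N S"
  using A
proof (induction rule: real_span_mat.induct)
  case zero
  then show ?case using commutator_zero_left[OF B] by (simp add: real_span_mat.zero)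
next
  case (gen A)
  then show ?case by (rule base)
next
  case (add A1 A2)
  then show ?case
    using commutator_add_left[OF real_span_mat_carrier[OF add.hyps(1) S]
        real_span_mat_carrier[OF add.hyps(2) S] B]
    by (simp add: real_span_mat.add)
next
  case (smult A c)
  then show ?case
    using commutator_smult_left[OF real_span_mat_carrier[OF smult.hyps(1) S] B]
    by (simp add: real_span_mat.smult)
qed

lemma real_span_mat_commutator:
  assumes S: "S \<subseteq> carrier_mat N N"
    and base: "\<And>x y. x \<in> S \<Longrightarrow> y \<in> S \<Longrightarrow> commutator x y \<in> real_span_mat N S"
    and A: "A \<in> real_span_mat N S" and B: "B \<in> real_span_mat N S"
  shows "commutator A B \<in> real_span_mat N S"
proof (rule real_span_mat_commutator_left[OF S real_span_mat_carrier[OF B S] _ A])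
  fix x assume x: "x \<in> S"
  have "commutator B x \<in> real_span_mat N S"
    using x S by (intro real_span_mat_commutator_left[OF S _ _ B]) (auto intro: base)
  then have "complex_of_real (-1) \<cdot>\<^sub>m commutator B x \<in> real_span_mat N S"
    by (rule real_span_mat.smult)
  moreover have "commutator x B = complex_of_real (-1) \<cdot>\<^sub>m commutator B x"
    using commutator_swap[OF real_span_mat_carrier[OF B S], of x] x S by auto
  ultimately show "commutator x B \<in> real_span_mat N S"
    by simp
qed
section \<open>The span of the Pauli strings commuting with \<open>X\<^sup>\<otimes>\<^sup>n\<close>\<close>

definition commutant_strings :: "nat \<Rightarrow> pauli list set" where
  "commutant_strings n = {P. length P = n \<and> P \<noteq> replicate n PI \<and> P \<noteq> replicate n PX \<and>
     pauli_mat P * pauli_mat (replicate n PX) = pauli_mat (replicate n PX) * pauli_mat P}"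

abbreviation commutant_span :: "nat \<Rightarrow> complex mat set" where
  "commutant_span n \<equiv> real_span_mat (2 ^ n) ((\<lambda>P. \<i> \<cdot>\<^sub>m pauli_mat P) ` commutant_strings n)"

lemma commutant_strings_iff:
  "P \<in> commutant_strings n \<longleftrightarrow>
     length P = n \<and> P \<noteq> replicate n PI \<and> P \<noteq> replicate n PX \<and> \<not> anticomm_Xn P"
  unfolding commutant_strings_def using pauli_mat_commute_Xn_iff by auto

lemma string_mul_commutant_strings:
  assumes P: "P \<in> commutant_strings n" and Q: "Q \<in> commutant_strings n" and PQ: "anticomm P Q"
  shows "string_mul P Q \<in> commutant_strings n"
proof -
  have l: "length P = n" "length Q = n" and s: "\<not> anticomm_Xn P" "\<not> anticomm_Xn Q"
    using P Q by (auto simp: commutant_strings_iff)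
  have "string_mul P Q \<noteq> replicate n PI"
  proof
    assume "string_mul P Q = replicate n PI"
    then have "Q = P"
      using string_mul_cancel[of P Q] string_mul_I_right[of P] l by simp
    with PQ show False by simp
  qed
  moreover have "string_mul P Q \<noteq> replicate n PX"
  proof
    assume "string_mul P Q = replicate n PX"
    then have "anticomm P (string_mul P Q) = anticomm_Xn P"
      using anticomm_Xn_iff_anticomm[of P] l by simp
    then show False
      using anticomm_string_mul[of P Q P] PQ s l by simp
  qed
  ultimately show ?thesis
    using l s by (simp add: commutant_strings_iff anticomm_Xn_string_mul)
qed

lemma commutant_strings_carrier:
  "(\<lambda>P. \<i> \<cdot>\<^sub>m pauli_mat P) ` commutant_strings n \<subseteq> carrier_mat (2^n) (2^n)"
  using pauli_mat_carrier by (auto simp: commutant_strings_def)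

lemma commutant_span_commutator:
  "A \<in> commutant_span n \<Longrightarrow> B \<in> commutant_span n \<Longrightarrow> commutator A B \<in> commutant_span n"
proof (rule real_span_mat_commutator[OF commutant_strings_carrier])
  fix x y
  assume "x \<in> (\<lambda>P. \<i> \<cdot>\<^sub>m pauli_mat P) ` commutant_strings n"
    "y \<in> (\<lambda>P. \<i> \<cdot>\<^sub>m pauli_mat P) ` commutant_strings n"
  then obtain P Q where PQ: "P \<in> commutant_strings n" "Q \<in> commutant_strings n"
    and xy: "x = \<i> \<cdot>\<^sub>m pauli_mat P" "y = \<i> \<cdot>\<^sub>m pauli_mat Q"
    by auto
  have l: "length P = n" "length Q = n" using PQ by (auto simp: commutant_strings_iff)
  show "commutator x y \<in> commutant_span n"
  proof (cases "anticomm P Q")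
    case True
    then have "\<i> \<cdot>\<^sub>m pauli_mat (string_mul P Q) \<in> commutant_span n"
      using string_mul_commutant_strings[OF PQ] by (intro real_span_mat.gen) blast
    then show ?thesis
      unfolding xy commutator_pauli_mat[OF l] if_P[OF True] by (rule real_span_mat.smult)
  next
    case False
    then show ?thesis
      unfolding xy commutator_pauli_mat[OF l] by (simp add: real_span_mat.zero)
  qed
qed

lemma length_two_site [simp]: "length (two_site n A B j) = n"
  by (simp add: two_site_def)

lemma two_site_nth:
  "k < n \<Longrightarrow> two_site n A B j ! k = (if k = j then A else if k = Suc j then B else PI)"
  by (simp add: two_site_def)

lemma two_site_eq_append:
  assumes "Suc j < n"
  shows "two_site n A B j = replicate j PI @ A # B # replicate (n - Suc (Suc j)) PI"
  using assms by (intro nth_equalityI) (auto simp: two_site_nth nth_append nth_Cons')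

lemma a13_generator_commutant_strings:
  assumes n: "3 \<le> n" and j: "Suc j < n" and AB: "(A, B) \<in> {(PX, PX), (PY, PY), (PY, PZ)}"
  shows "two_site n A B j \<in> commutant_strings n"
proof -
  have "A \<in> set (two_site n A B j)" and "PI \<in> set (two_site n A B j)"
    using n j by (auto simp: two_site_eq_append[OF j])
  moreover have "A \<noteq> PI" using AB by auto
  moreover have "\<not> anticomm_Xn (two_site n A B j)"
    using AB by (auto simp: two_site_eq_append[OF j] anticomm_Xn_append anticomm_X_def)
  ultimately show ?thesis
    by (auto simp: commutant_strings_iff)
qed

lemma a13_subset_commutant_span:
  assumes "3 \<le> n"
  shows "a13 n \<subseteq> commutant_span n"
proof
  fix A assume "A \<in> a13 n"
  then show "A \<in> commutant_span n" unfolding a13_def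
  proof (induction rule: lie_gen.induct)
    case (gen A)
    then show ?case
      using a13_generator_commutant_strings[OF assms] by (auto intro: real_span_mat.gen)
  qed (auto intro: real_span_mat.intros commutant_span_commutator)
qed

text \<open>\<open>r \<mapsto> N - 1 - r\<close> is the permutation matrix \<open>J\<close> of \<open>X\<^sup>\<otimes>\<^sup>n\<close>: the members of
  \<open>flip_sym_su N\<close> are the traceless skew-Hermitian \<open>A\<close> with \<open>J A J = A\<close> and \<open>tr (A J) = 0\<close>.\<close>

definition flip_sym_su :: "nat \<Rightarrow> complex mat set" where
  "flip_sym_su N = {A \<in> carrier_mat N N.
     (\<forall>r<N. \<forall>c<N. A $$ (N-1-r, N-1-c) = A $$ (r,c)) \<and>
     (\<forall>r<N. \<forall>c<N. cnj (A $$ (c,r)) = - A $$ (r,c)) \<and>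
     (\<Sum>r<N. A $$ (r,r)) = 0 \<and> (\<Sum>r<N. A $$ (r, N-1-r)) = 0}"

lemma flip_sym_suD:
  assumes "A \<in> flip_sym_su N"
  shows "A \<in> carrier_mat N N"
    and "\<And>r c. r < N \<Longrightarrow> c < N \<Longrightarrow> A $$ (N-1-r, N-1-c) = A $$ (r,c)"
    and "\<And>r c. r < N \<Longrightarrow> c < N \<Longrightarrow> cnj (A $$ (c,r)) = - A $$ (r,c)"
    and "(\<Sum>r<N. A $$ (r,r)) = 0" "(\<Sum>r<N. A $$ (r, N-1-r)) = 0"
  using assms by (auto simp: flip_sym_su_def)

lemma smult_i_pauli_mat_flip_sym_su:
  assumes "P \<in> commutant_strings n"
  shows "\<i> \<cdot>\<^sub>m pauli_mat P \<in> flip_sym_su (2^n)"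
proof -
  have l: "length P = n" and ne: "P \<noteq> replicate n PI" "P \<noteq> replicate n PX"
    and s: "\<not> anticomm_Xn P"
    using assms by (auto simp: commutant_strings_iff)
  have "(\<Sum>r<2^n. (\<i> \<cdot>\<^sub>m pauli_mat P) $$ (r,r)) = \<i> * (\<Sum>r<2^n. pauli_mat P $$ (r,r))"
    "(\<Sum>r<2^n. (\<i> \<cdot>\<^sub>m pauli_mat P) $$ (r,2^n-1-r)) = \<i> * (\<Sum>r<2^n. pauli_mat P $$ (r,2^n-1-r))"
    using l by (simp_all add: sum_distrib_left)
  moreover have "(\<Sum>r<2^n. pauli_mat P $$ (r,r)) = 0" "(\<Sum>r<2^n. pauli_mat P $$ (r,2^n-1-r)) = 0"
    using trace_pauli_mat[of P] antitrace_pauli_mat[of P] ne l by auto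
  ultimately show ?thesis
    using l s pauli_mat_flip[of _ P] pauli_mat_herm[of _ P] pauli_mat_carrier[of P]
    by (simp add: flip_sym_su_def)
qed

lemma commutant_span_subset_flip_sym_su: "commutant_span n \<subseteq> flip_sym_su (2^n)"
proof
  fix A assume "A \<in> commutant_span n"
  then show "A \<in> flip_sym_su (2^n)"
  proof (induction rule: real_span_mat.induct)
    case zero
    then show ?case by (simp add: flip_sym_su_def)
  next
    case (gen A)
    then show ?case using smult_i_pauli_mat_flip_sym_su by blast
  next
    case (add A B)
    then show ?case by (auto simp: flip_sym_su_def sum.distrib)
  next
    case (smult A c)
    then show ?case using flip_sym_suD(1)[OF smult.IH]
      by (auto simp: flip_sym_su_def sum_distrib_left[symmetric])
  qed
qed

definition all_strings :: "nat \<Rightarrow> pauli list set" where "all_strings n = {P. length P = n}"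

lemma finite_all_strings: "finite (all_strings n)"
  using finite_lists_length_eq[of "UNIV::pauli set" n] by (simp add: all_strings_def)

lemma all_strings_Suc: "all_strings (Suc n) = (\<lambda>(a,P). a#P) ` (UNIV \<times> all_strings n)"
  unfolding all_strings_def by (auto simp: length_Suc_conv image_iff)

lemma sum_all_strings_Suc: "(\<Sum>Q\<in>all_strings (Suc n). g Q) = (\<Sum>a\<in>UNIV. \<Sum>P\<in>all_strings n. g (a#P))"
proof -
  have "inj_on (\<lambda>(a,P). a#P) (UNIV \<times> all_strings n)" by (auto simp: inj_on_def)
  then have "(\<Sum>Q\<in>all_strings (Suc n). g Q) = (\<Sum>x\<in>UNIV \<times> all_strings n. g ((\<lambda>(a,P). a#P) x))"
    unfolding all_strings_Suc using sum.reindex[OF \<open>inj_on _ _\<close>, of g] by (simp add: comp_def)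
  also have "\<dots> = (\<Sum>a\<in>UNIV. \<Sum>P\<in>all_strings n. g (a#P))"
    by (simp add: sum.cartesian_product prod.case_distrib)
  finally show ?thesis .
qed

lemma pauli_entry_completeness:
  assumes "l < 2" "k < 2" "r < 2" "c < 2"
  shows "(\<Sum>a\<in>UNIV. pauli_entry a l k * pauli_entry a r c) = (if l = c \<and> k = r then 2 else 0)"
  using less_2_cases[OF assms(1)] less_2_cases[OF assms(2)] less_2_cases[OF assms(3)] less_2_cases[OF assms(4)]
  by (auto simp: UNIV_pauli)

lemma pauli_mat_completeness:
  "l < 2^n \<Longrightarrow> k < 2^n \<Longrightarrow> r < 2^n \<Longrightarrow> c < 2^n \<Longrightarrow>
   (\<Sum>P\<in>all_strings n. pauli_mat P $$ (l,k) * pauli_mat P $$ (r,c)) = (if l = c \<and> k = r then 2^n else 0)"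
proof (induction n arbitrary: l k r c)
  case 0 then show ?case by (simp add: all_strings_def pauli_mat_Nil)
next
  case (Suc n)
  define N where "N = (2::nat)^n"
  have N0: "N > 0" by (simp add: N_def)
  have b: "l < 2*N" "k < 2*N" "r < 2*N" "c < 2*N" using Suc.prems by (simp_all add: N_def)
  have "(\<Sum>P\<in>all_strings (Suc n). pauli_mat P $$ (l,k) * pauli_mat P $$ (r,c)) =
     (\<Sum>a\<in>UNIV. \<Sum>P\<in>all_strings n. pauli_mat (a#P) $$ (l,k) * pauli_mat (a#P) $$ (r,c))"
    by (rule sum_all_strings_Suc)
  also have "\<dots> = (\<Sum>a\<in>UNIV. \<Sum>P\<in>all_strings n. (pauli_entry a (l div N) (k div N) * pauli_entry a (r div N) (c div N)) *
       (pauli_mat P $$ (l mod N, k mod N) * pauli_mat P $$ (r mod N, c mod N)))"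
  proof (intro sum.cong refl)
    fix a P assume "P \<in> all_strings n"
    then have "length P = n" by (simp add: all_strings_def)
    then show "pauli_mat (a#P) $$ (l,k) * pauli_mat (a#P) $$ (r,c) =
      (pauli_entry a (l div N) (k div N) * pauli_entry a (r div N) (c div N)) *
       (pauli_mat P $$ (l mod N, k mod N) * pauli_mat P $$ (r mod N, c mod N))"
      using b by (simp add: pauli_mat_Cons N_def)
  qed
  also have "\<dots> = (\<Sum>a\<in>UNIV. pauli_entry a (l div N) (k div N) * pauli_entry a (r div N) (c div N)) *
      (\<Sum>P\<in>all_strings n. pauli_mat P $$ (l mod N, k mod N) * pauli_mat P $$ (r mod N, c mod N))"
    by (simp add: sum_product)
  also have "\<dots> = (if l div N = c div N \<and> k div N = r div N then 2 else 0) *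
      (if l mod N = c mod N \<and> k mod N = r mod N then of_nat N else 0)"
    using pauli_entry_completeness[OF div_less_2[OF b(1)] div_less_2[OF b(2)] div_less_2[OF b(3)] div_less_2[OF b(4)]]
      Suc.IH[of "l mod N" "k mod N" "r mod N" "c mod N"] N0 by (simp add: N_def)
  also have "\<dots> = (if l = c \<and> k = r then 2^Suc n else 0)"
    using eq_iff_div_mod_eq[OF N0, of l c] eq_iff_div_mod_eq[OF N0, of k r] by (auto simp: N_def)
  finally show ?case .
qed

lemma sum_in_commutant_span:
  assumes "finite F" "F \<subseteq> commutant_strings n"
  shows "mat (2^n) (2^n) (\<lambda>(r,c). \<Sum>P\<in>F. complex_of_real (t P) * (\<i> * pauli_mat P $$ (r,c))) \<in> commutant_span n"
  using assms
proof (induction F rule: finite_induct)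
  case empty
  have e: "mat (2^n) (2^n) (\<lambda>(r,c). \<Sum>P\<in>{}. complex_of_real (t P) * (\<i> * pauli_mat P $$ (r,c))) = 0\<^sub>m (2^n) (2^n)"
    by (rule eq_matI) auto
  show ?case unfolding e by (rule real_span_mat.zero)
next
  case (insert x F)
  have x: "x \<in> commutant_strings n" and F: "F \<subseteq> commutant_strings n" using insert.prems by auto
  have lx: "length x = n" using x by (simp add: commutant_strings_iff)
  have g: "\<i> \<cdot>\<^sub>m pauli_mat x \<in> commutant_span n" using x by (intro real_span_mat.gen) blast
  have eq: "mat (2^n) (2^n) (\<lambda>(r,c). \<Sum>P\<in>insert x F. complex_of_real (t P) * (\<i> * pauli_mat P $$ (r,c))) =
      mat (2^n) (2^n) (\<lambda>(r,c). \<Sum>P\<in>F. complex_of_real (t P) * (\<i> * pauli_mat P $$ (r,c))) +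
      complex_of_real (t x) \<cdot>\<^sub>m (\<i> \<cdot>\<^sub>m pauli_mat x)"
    by (rule eq_matI) (use insert.hyps lx in auto)
  show ?case unfolding eq by (rule real_span_mat.add[OF insert.IH[OF F] real_span_mat.smult[OF g]])
qed

lemma sum_reverse_index: "(\<Sum>i<N. g (N - 1 - i)) = (\<Sum>i<(N::nat). (g i :: complex))"
  using sum.nat_diff_reindex[of g N] by simp

definition pauli_coeff :: "pauli list \<Rightarrow> complex mat \<Rightarrow> complex" where
  "pauli_coeff P A = (\<Sum>k<2 ^ length P. \<Sum>l<2 ^ length P. pauli_mat P $$ (l,k) * A $$ (k,l))"

lemma pauli_expansion:
  assumes rc: "r < 2^n" "c < 2^n"
  shows "(\<Sum>P\<in>all_strings n. pauli_coeff P A * pauli_mat P $$ (r,c)) = 2^n * A $$ (r,c)"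
proof -
  let ?N = "2^n :: nat"
  have "(\<Sum>P\<in>all_strings n. pauli_coeff P A * pauli_mat P $$ (r,c)) =
      (\<Sum>P\<in>all_strings n. \<Sum>k<?N. \<Sum>l<?N. pauli_mat P $$ (l,k) * pauli_mat P $$ (r,c) * A $$ (k,l))"
    by (intro sum.cong refl) (simp add: pauli_coeff_def all_strings_def sum_distrib_left mult_ac)
  also have "\<dots> = (\<Sum>k<?N. \<Sum>l<?N. \<Sum>P\<in>all_strings n. pauli_mat P $$ (l,k) * pauli_mat P $$ (r,c) * A $$ (k,l))"
    by (subst sum.swap, rule sum.cong[OF refl], rule sum.swap)
  also have "\<dots> = (\<Sum>k<?N. \<Sum>l<?N. (if k = r \<and> l = c then 2^n else 0) * A $$ (k,l))"
    using rc by (intro sum.cong refl)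
      (simp add: pauli_mat_completeness sum_distrib_right[symmetric] conj_commute)
  also have "\<dots> = (\<Sum>k<?N. if k = r then 2^n * A $$ (k,c) else 0)"
    using rc(2) by (intro sum.cong refl) (auto simp: if_distrib[of "\<lambda>x. x * _"] cong: if_cong)
  also have "\<dots> = 2^n * A $$ (r,c)"
    using rc(1) by simp
  finally show ?thesis .
qed

lemma pauli_coeff_imaginary:
  assumes "A \<in> flip_sym_su (2 ^ length P)"
  shows "pauli_coeff P A = \<i> * complex_of_real (Im (pauli_coeff P A))"
proof (rule cnj_eq_uminus_imaginary)
  let ?N = "2 ^ length P :: nat"
  have "cnj (pauli_coeff P A) = (\<Sum>k<?N. \<Sum>l<?N. pauli_mat P $$ (k,l) * (- A $$ (l,k)))"
    by (simp add: pauli_coeff_def pauli_mat_herm flip_sym_suD(3)[OF assms])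
  also have "\<dots> = - (\<Sum>l<?N. \<Sum>k<?N. pauli_mat P $$ (k,l) * A $$ (l,k))"
    by (subst sum.swap) (simp add: sum_negf)
  also have "\<dots> = - pauli_coeff P A"
    by (simp add: pauli_coeff_def)
  finally show "cnj (pauli_coeff P A) = - pauli_coeff P A" .
qed

lemma pauli_coeff_anticomm_Xn:
  assumes A: "A \<in> flip_sym_su (2 ^ length P)" and P: "anticomm_Xn P"
  shows "pauli_coeff P A = 0"
proof -
  let ?N = "2 ^ length P :: nat"
  have "pauli_coeff P A = (\<Sum>k<?N. \<Sum>l<?N. pauli_mat P $$ (?N-1-l, ?N-1-k) * A $$ (?N-1-k, ?N-1-l))"
    unfolding pauli_coeff_def
    by (subst sum_reverse_index[symmetric], rule sum.cong[OF refl],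
        subst sum_reverse_index[symmetric], rule refl)
  also have "\<dots> = (\<Sum>k<?N. \<Sum>l<?N. - (pauli_mat P $$ (l,k) * A $$ (k,l)))"
  proof (intro sum.cong refl)
    fix k l assume "k \<in> {..<?N}" "l \<in> {..<?N}"
    then show "pauli_mat P $$ (?N-1-l, ?N-1-k) * A $$ (?N-1-k, ?N-1-l) = - (pauli_mat P $$ (l,k) * A $$ (k,l))"
      using pauli_mat_flip[of l P k] flip_sym_suD(2)[OF A, of k l] P by simp
  qed
  also have "\<dots> = - pauli_coeff P A"
    by (simp add: pauli_coeff_def sum_negf)
  finally show ?thesis by simp
qed

lemma pauli_coeff_vanishes:
  assumes A: "A \<in> flip_sym_su (2 ^ n)" and P: "length P = n" "P \<notin> commutant_strings n"
  shows "pauli_coeff P A = 0"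
proof -
  let ?N = "2 ^ n :: nat"
  consider "P = replicate n PI" | "P = replicate n PX" | "anticomm_Xn P"
    using P by (auto simp: commutant_strings_iff)
  then show ?thesis
  proof cases
    case 1
    have "pauli_coeff P A = (\<Sum>k<?N. \<Sum>l<?N. if l = k then A $$ (k,l) else 0)"
      unfolding pauli_coeff_def 1 pauli_mat_I by (intro sum.cong refl) auto
    also have "\<dots> = (\<Sum>k<?N. A $$ (k,k))"
      by simp
    finally show ?thesis using flip_sym_suD(4)[OF A] by simp
  next
    case 2
    have "pauli_coeff P A = (\<Sum>k<?N. \<Sum>l<?N. if k = ?N - 1 - l then A $$ (k,l) else 0)"
      unfolding pauli_coeff_def 2 by (intro sum.cong refl) (auto simp: pauli_mat_X)
    also have "\<dots> = (\<Sum>l<?N. A $$ (?N - 1 - l, l))"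
      by (subst sum.swap) simp
    also have "\<dots> = (\<Sum>l<?N. A $$ (l, ?N - 1 - l))"
      by (subst sum_reverse_index[symmetric]) (auto intro: sum.cong)
    finally show ?thesis using flip_sym_suD(5)[OF A] by simp
  next
    case 3
    then show ?thesis using A P pauli_coeff_anticomm_Xn by simp
  qed
qed

lemma flip_sym_su_subset_commutant_span: "flip_sym_su (2^n) \<subseteq> commutant_span n"
proof
  fix A assume A: "A \<in> flip_sym_su (2^n)"
  let ?N = "2 ^ n :: nat"
  define t where "t P = Im (pauli_coeff P A) / 2^n" for P
  have sub: "commutant_strings n \<subseteq> all_strings n"
    by (auto simp: commutant_strings_iff all_strings_def)
  have entry: "A $$ (r,c) = (\<Sum>P\<in>commutant_strings n. complex_of_real (t P) * (\<i> * pauli_mat P $$ (r,c)))"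
    if rc: "r < ?N" "c < ?N" for r c
  proof -
    have "A $$ (r,c) = (\<Sum>P\<in>all_strings n. pauli_coeff P A * pauli_mat P $$ (r,c)) / 2^n"
      using pauli_expansion[OF rc] by simp
    also have "\<dots> = (\<Sum>P\<in>commutant_strings n. pauli_coeff P A * pauli_mat P $$ (r,c)) / 2^n"
      using A by (subst sum.mono_neutral_right[OF finite_all_strings sub])
        (auto simp: pauli_coeff_vanishes all_strings_def)
    also have "\<dots> = (\<Sum>P\<in>commutant_strings n. complex_of_real (t P) * (\<i> * pauli_mat P $$ (r,c)))"
      unfolding sum_divide_distrib
    proof (intro sum.cong refl)
      fix P assume "P \<in> commutant_strings n"
      then have "pauli_coeff P A = \<i> * complex_of_real (Im (pauli_coeff P A))"
        using A by (intro pauli_coeff_imaginary) (simp add: commutant_strings_iff)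
      then show "pauli_coeff P A * pauli_mat P $$ (r,c) / 2^n =
          complex_of_real (t P) * (\<i> * pauli_mat P $$ (r,c))"
        unfolding t_def by (metis (no_types, lifting) mult.assoc mult.left_commute of_real_divide
            of_real_numeral of_real_power times_divide_eq_left)
    qed
    finally show ?thesis .
  qed
  have "A = mat ?N ?N (\<lambda>(r,c). \<Sum>P\<in>commutant_strings n. complex_of_real (t P) * (\<i> * pauli_mat P $$ (r,c)))"
    using A entry by (intro eq_matI) (auto simp: flip_sym_su_def)
  then show "A \<in> commutant_span n"
    using sum_in_commutant_span[OF finite_subset[OF sub finite_all_strings] subset_refl, of t] by simp
qed

section \<open>The commutant span is \<open>su(2\<^sup>n\<^sup>-\<^sup>1) \<oplus> su(2\<^sup>n\<^sup>-\<^sup>1)\<close>\<close>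

lemma sum_lessThan_double_reverse: "(\<Sum>k<2*(h::nat). g k) = (\<Sum>k<h. g k) + (\<Sum>k<h. (g (2*h-1-k) :: complex))"
proof -
  have "(\<Sum>k<2*h. g k) = (\<Sum>k<h. g k) + (\<Sum>k<h. g (h + k))" by (rule sum_lessThan_double)
  also have "(\<Sum>k<h. g (h + k)) = (\<Sum>k<h. g (h + (h - 1 - k)))"
    using sum.nat_diff_reindex[of "\<lambda>k. g (h + k)" h] by simp
  also have "\<dots> = (\<Sum>k<h. g (2*h-1-k))" by (intro sum.cong refl) (auto simp: mult_2)
  finally show ?thesis .
qed

lemma index_mult_fold:
  fixes A B :: "complex mat"
  assumes A: "A \<in> carrier_mat (2*h) (2*h)" and B: "B \<in> carrier_mat (2*h) (2*h)"
    and Bf: "\<And>r c. r < 2*h \<Longrightarrow> c < 2*h \<Longrightarrow> B $$ (2*h-1-r, 2*h-1-c) = B $$ (r,c)"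
    and r: "r < 2*h" and c: "c < 2*h" and s: "s = 1 \<or> s = -1"
  shows "(A * B) $$ (r,c) + s * (A * B) $$ (r, 2*h-1-c) =
     (\<Sum>k<h. (A $$ (r,k) + s * A $$ (r, 2*h-1-k)) * (B $$ (k,c) + s * B $$ (k, 2*h-1-c)))"
proof -
  let ?N = "2*h"
  have c': "2*h-1-c < 2*h" using c by simp
  have "(A * B) $$ (r,c) + s * (A * B) $$ (r, 2*h-1-c) =
     (\<Sum>k<?N. A $$ (r,k) * (B $$ (k,c) + s * B $$ (k, 2*h-1-c)))"
  proof -
    have m1: "(A*B) $$ (r,c) = (\<Sum>k<?N. A $$ (r,k) * B $$ (k,c))" by (rule index_mult_mat_sum[OF A B r c])
    have m2: "(A*B) $$ (r,2*h-1-c) = (\<Sum>k<?N. A $$ (r,k) * B $$ (k,2*h-1-c))" by (rule index_mult_mat_sum[OF A B r c'])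
    show ?thesis unfolding m1 m2 sum_distrib_left sum.distrib[symmetric] by (intro sum.cong refl) (simp add: algebra_simps)
  qed
  also have "\<dots> = (\<Sum>k<h. A $$ (r,k) * (B $$ (k,c) + s * B $$ (k, 2*h-1-c))) +
      (\<Sum>k<h. A $$ (r,2*h-1-k) * (B $$ (2*h-1-k,c) + s * B $$ (2*h-1-k, 2*h-1-c)))"
    using sum_lessThan_double_reverse[where g="\<lambda>k. A $$ (r,k) * (B $$ (k,c) + s * B $$ (k, 2*h-1-c))"] by simp
  also have "(\<Sum>k<h. A $$ (r,2*h-1-k) * (B $$ (2*h-1-k,c) + s * B $$ (2*h-1-k, 2*h-1-c))) =
      (\<Sum>k<h. s * A $$ (r,2*h-1-k) * (B $$ (k,c) + s * B $$ (k, 2*h-1-c)))"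
  proof (intro sum.cong refl)
    fix k assume k: "k \<in> {..<h}"
    have e1: "B $$ (2*h-1-k, c) = B $$ (k, 2*h-1-c)" using Bf[of k "2*h-1-c"] k c by auto
    have e2: "B $$ (2*h-1-k, 2*h-1-c) = B $$ (k, c)" using Bf[of k c] k c by auto
    have ss: "s * s = 1" using s by auto
    show "A $$ (r,2*h-1-k) * (B $$ (2*h-1-k,c) + s * B $$ (2*h-1-k, 2*h-1-c)) =
      s * A $$ (r,2*h-1-k) * (B $$ (k,c) + s * B $$ (k, 2*h-1-c))"
      unfolding e1 e2 using ss by (simp add: algebra_simps)
  qed
  also have "(\<Sum>k<h. A $$ (r,k) * (B $$ (k,c) + s * B $$ (k, 2*h-1-c))) +
      (\<Sum>k<h. s * A $$ (r,2*h-1-k) * (B $$ (k,c) + s * B $$ (k, 2*h-1-c))) =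
      (\<Sum>k<h. (A $$ (r,k) + s * A $$ (r, 2*h-1-k)) * (B $$ (k,c) + s * B $$ (k, 2*h-1-c)))"
    by (simp add: sum.distrib[symmetric] algebra_simps)
  finally show ?thesis .
qed

text \<open>\<open>fold_half h 1 A\<close> and \<open>fold_half h (-1) A\<close> are the diagonal blocks of \<open>A\<close> in the basis
  \<open>e\<^sub>r \<plusminus> e\<^sub>2\<^sub>h\<^sub>-\<^sub>1\<^sub>-\<^sub>r\<close> (\<open>r < h\<close>) of eigenvectors of \<open>J\<close>.\<close>

definition fold_half :: "nat \<Rightarrow> complex \<Rightarrow> complex mat \<Rightarrow> complex mat" where
  "fold_half h s A = mat h h (\<lambda>(r,c). A $$ (r,c) + s * A $$ (r, 2*h-1-c))"

lemma fold_half_carrier: "fold_half h s A \<in> carrier_mat h h" by (simp add: fold_half_def)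

lemma flip_sym_su_half_traces:
  assumes "A \<in> flip_sym_su (2*h)"
  shows "(\<Sum>r<h. A $$ (r,r)) = 0" "(\<Sum>r<h. A $$ (r, 2*h-1-r)) = 0"
proof -
  have "0 = (\<Sum>r<2*h. A $$ (r,r))" using flip_sym_suD(4)[OF assms] by simp
  also have "\<dots> = (\<Sum>r<h. A $$ (r,r)) + (\<Sum>r<h. A $$ (2*h-1-r,2*h-1-r))" by (rule sum_lessThan_double_reverse)
  also have "(\<Sum>r<h. A $$ (2*h-1-r,2*h-1-r)) = (\<Sum>r<h. A $$ (r,r))"
    by (intro sum.cong refl) (use flip_sym_suD(2)[OF assms] in auto)
  finally show "(\<Sum>r<h. A $$ (r,r)) = 0" by simp
  have "0 = (\<Sum>r<2*h. A $$ (r,2*h-1-r))" using flip_sym_suD(5)[OF assms] by simp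
  also have "\<dots> = (\<Sum>r<h. A $$ (r,2*h-1-r)) + (\<Sum>r<h. A $$ (2*h-1-r, 2*h-1-(2*h-1-r)))"
    using sum_lessThan_double_reverse[where g="\<lambda>r. A $$ (r, 2*h-1-r)"] by simp
  also have "(\<Sum>r<h. A $$ (2*h-1-r, 2*h-1-(2*h-1-r))) = (\<Sum>r<h. A $$ (r,2*h-1-r))"
  proof (intro sum.cong refl)
    fix r assume "r \<in> {..<h}"
    then have r: "r < 2*h" "2*h-1-(2*h-1-r) = r" by auto
    show "A $$ (2*h-1-r, 2*h-1-(2*h-1-r)) = A $$ (r,2*h-1-r)"
      unfolding r(2) using flip_sym_suD(2)[OF assms r(1), of "2*h-1-r"] r by simp
  qed
  finally show "(\<Sum>r<h. A $$ (r, 2*h-1-r)) = 0" by simp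
qed

lemma fold_half_su:
  assumes A: "A \<in> flip_sym_su (2*h)" and s: "s = 1 \<or> s = -1"
  shows "fold_half h s A \<in> su h"
proof -
  have cs: "cnj s = s" using s by auto
  have ct: "conj_transpose (fold_half h s A) = - fold_half h s A"
  proof (rule eq_matI)
    fix i j assume "i < dim_row (- fold_half h s A)" "j < dim_col (- fold_half h s A)"
    then have ij: "i < h" "j < h" by (auto simp: fold_half_def)
    have e: "A $$ (2*h-1-i, j) = A $$ (i, 2*h-1-j)"
      using flip_sym_suD(2)[OF A, of i "2*h-1-j"] ij by simp
    show "conj_transpose (fold_half h s A) $$ (i,j) = (- fold_half h s A) $$ (i,j)"
      using ij flip_sym_suD(3)[OF A, of i j] flip_sym_suD(3)[OF A, of "2*h-1-i" j] e cs
      by (simp add: conj_transpose_def fold_half_def)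
  qed (auto simp: conj_transpose_def fold_half_def)
  have tr: "mat_trace (fold_half h s A) = 0"
  proof -
    have "mat_trace (fold_half h s A) = (\<Sum>r<h. A $$ (r,r) + s * A $$ (r, 2*h-1-r))"
      by (simp add: mat_trace_def fold_half_def)
    also have "\<dots> = (\<Sum>r<h. A $$ (r,r)) + s * (\<Sum>r<h. A $$ (r, 2*h-1-r))"
      by (simp add: sum.distrib sum_distrib_left)
    also have "\<dots> = 0" using flip_sym_su_half_traces[OF A] by simp
    finally show ?thesis .
  qed
  show ?thesis using ct tr fold_half_carrier by (simp add: su_def)
qed

lemma fold_half_add: "A \<in> carrier_mat (2*h) (2*h) \<Longrightarrow> B \<in> carrier_mat (2*h) (2*h) \<Longrightarrow>
  fold_half h s (A + B) = fold_half h s A + fold_half h s B"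
  by (rule eq_matI) (auto simp: fold_half_def algebra_simps)

lemma fold_half_smult: "A \<in> carrier_mat (2*h) (2*h) \<Longrightarrow> fold_half h s (c \<cdot>\<^sub>m A) = c \<cdot>\<^sub>m fold_half h s A"
  by (rule eq_matI) (auto simp: fold_half_def algebra_simps)

lemma fold_half_mult:
  assumes A: "A \<in> flip_sym_su (2*h)" and B: "B \<in> flip_sym_su (2*h)" and s: "s = 1 \<or> s = -1"
  shows "fold_half h s (A * B) = fold_half h s A * fold_half h s B"
proof (rule eq_matI)
  fix r c assume "r < dim_row (fold_half h s A * fold_half h s B)" "c < dim_col (fold_half h s A * fold_half h s B)"
  then have rc: "r < h" "c < h" by (auto simp: fold_half_def)
  have rc2: "r < 2*h" "c < 2*h" using rc by auto
  have "fold_half h s (A * B) $$ (r,c) = (A * B) $$ (r,c) + s * (A * B) $$ (r, 2*h-1-c)"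
    using rc by (simp add: fold_half_def)
  also have "\<dots> = (\<Sum>k<h. (A $$ (r,k) + s * A $$ (r, 2*h-1-k)) * (B $$ (k,c) + s * B $$ (k, 2*h-1-c)))"
    by (rule index_mult_fold[OF flip_sym_suD(1)[OF A] flip_sym_suD(1)[OF B] flip_sym_suD(2)[OF B] rc2 s])
  also have "\<dots> = (\<Sum>k<h. fold_half h s A $$ (r,k) * fold_half h s B $$ (k,c))"
    by (intro sum.cong refl) (use rc in \<open>simp add: fold_half_def\<close>)
  also have "\<dots> = (fold_half h s A * fold_half h s B) $$ (r,c)"
    by (rule index_mult_mat_sum[OF fold_half_carrier fold_half_carrier rc, symmetric])
  finally show "fold_half h s (A * B) $$ (r,c) = (fold_half h s A * fold_half h s B) $$ (r,c)" .
qed (auto simp: fold_half_def)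

lemma fold_half_commutator:
  assumes A: "A \<in> flip_sym_su (2*h)" and B: "B \<in> flip_sym_su (2*h)" and s: "s = 1 \<or> s = -1"
  shows "fold_half h s (commutator A B) = commutator (fold_half h s A) (fold_half h s B)"
proof (rule eq_matI)
  fix r c assume "r < dim_row (commutator (fold_half h s A) (fold_half h s B))" "c < dim_col (commutator (fold_half h s A) (fold_half h s B))"
  then have rc: "r < h" "c < h" by (auto simp: fold_half_def commutator_def)
  have "fold_half h s (commutator A B) $$ (r,c) = fold_half h s (A * B) $$ (r,c) - fold_half h s (B * A) $$ (r,c)"
    using rc flip_sym_suD(1)[OF A] flip_sym_suD(1)[OF B] by (simp add: fold_half_def commutator_def algebra_simps)
  also have "\<dots> = commutator (fold_half h s A) (fold_half h s B) $$ (r,c)"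
    unfolding fold_half_mult[OF A B s] fold_half_mult[OF B A s] using rc by (simp add: commutator_def fold_half_def)
  finally show "fold_half h s (commutator A B) $$ (r,c) = commutator (fold_half h s A) (fold_half h s B) $$ (r,c)" .
qed (auto simp: fold_half_def commutator_def)

definition unfold_half :: "nat \<Rightarrow> complex mat \<Rightarrow> complex mat \<Rightarrow> complex mat" where
  "unfold_half h B C = mat (2*h) (2*h) (\<lambda>(r,c).
    if r < h then (if c < h then (B $$ (r,c) + C $$ (r,c)) / 2 else (B $$ (r,2*h-1-c) - C $$ (r,2*h-1-c)) / 2)
    else (if c < h then (B $$ (2*h-1-r,c) - C $$ (2*h-1-r,c)) / 2
          else (B $$ (2*h-1-r,2*h-1-c) + C $$ (2*h-1-r,2*h-1-c)) / 2))"

lemma unfold_fold_half: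
  assumes A: "A \<in> flip_sym_su (2*h)"
  shows "unfold_half h (fold_half h 1 A) (fold_half h (-1) A) = A"
proof (rule eq_matI)
  fix r c assume "r < dim_row A" "c < dim_col A"
  then have rc: "r < 2*h" "c < 2*h" using flip_sym_suD(1)[OF A] by auto
  have f: "A $$ (2*h-1-r, 2*h-1-c) = A $$ (r,c)" by (rule flip_sym_suD(2)[OF A rc])
  have f2: "A $$ (2*h-1-r, c) = A $$ (r, 2*h-1-c)" using flip_sym_suD(2)[OF A rc(1), of "2*h-1-c"] rc by simp
  show "unfold_half h (fold_half h 1 A) (fold_half h (-1) A) $$ (r,c) = A $$ (r,c)"
    using rc f f2 by (auto simp: unfold_half_def fold_half_def)
qed (use flip_sym_suD(1)[OF A] in \<open>auto simp: unfold_half_def\<close>)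

lemma fold_half_unfold:
  assumes B: "B \<in> carrier_mat h h" and C: "C \<in> carrier_mat h h"
  shows "fold_half h 1 (unfold_half h B C) = B" "fold_half h (-1) (unfold_half h B C) = C"
proof -
  show "fold_half h 1 (unfold_half h B C) = B"
  proof (rule eq_matI)
    fix r c assume "r < dim_row B" "c < dim_col B"
    then have rc: "r < h" "c < h" using B by auto
    have e: "\<not> (2*h-1-c < h)" "2*h-1-(2*h-1-c) = c" "2*h-1-c < 2*h" using rc by auto
    show "fold_half h 1 (unfold_half h B C) $$ (r,c) = B $$ (r,c)"
      using rc e by (simp add: fold_half_def unfold_half_def field_simps)
  qed (use B in \<open>auto simp: fold_half_def\<close>)
  show "fold_half h (-1) (unfold_half h B C) = C"
  proof (rule eq_matI)
    fix r c assume "r < dim_row C" "c < dim_col C"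
    then have rc: "r < h" "c < h" using C by auto
    have e: "\<not> (2*h-1-c < h)" "2*h-1-(2*h-1-c) = c" "2*h-1-c < 2*h" using rc by auto
    show "fold_half h (-1) (unfold_half h B C) $$ (r,c) = C $$ (r,c)"
      using rc e by (simp add: fold_half_def unfold_half_def field_simps)
  qed (use C in \<open>auto simp: fold_half_def\<close>)
qed

lemma suD:
  assumes "B \<in> su h"
  shows "B \<in> carrier_mat h h" "\<And>r c. r < h \<Longrightarrow> c < h \<Longrightarrow> cnj (B $$ (c,r)) = - B $$ (r,c)"
    "(\<Sum>r<h. B $$ (r,r)) = 0"
proof -
  show Bc: "B \<in> carrier_mat h h" using assms by (simp add: su_def)
  have ct: "conj_transpose B = - B" using assms by (simp add: su_def)
  show "cnj (B $$ (c,r)) = - B $$ (r,c)" if "r < h" "c < h" for r c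
  proof -
    have "conj_transpose B $$ (r,c) = (- B) $$ (r,c)" using ct by simp
    then show ?thesis using that Bc by (simp add: conj_transpose_def)
  qed
  show "(\<Sum>r<h. B $$ (r,r)) = 0" using assms Bc by (simp add: su_def mat_trace_def)
qed

lemma unfold_half_flip_sym_su:
  assumes B: "B \<in> su h" and C: "C \<in> su h"
  shows "unfold_half h B C \<in> flip_sym_su (2*h)"
proof -
  note Bp = suD[OF B] and Cp = suD[OF C]
  let ?R = "unfold_half h B C"
  have c: "?R \<in> carrier_mat (2*h) (2*h)" by (simp add: unfold_half_def)
  have fl: "\<forall>r<2*h. \<forall>c<2*h. ?R $$ (2*h-1-r, 2*h-1-c) = ?R $$ (r,c)"
    by (auto simp: unfold_half_def)
  have he: "\<forall>r<2*h. \<forall>c<2*h. cnj (?R $$ (c,r)) = - ?R $$ (r,c)"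
  proof (intro allI impI)
    fix r c assume rc: "r < 2*h" "c < 2*h"
    consider "r < h" "c < h" | "r < h" "\<not> c < h" | "\<not> r < h" "c < h" | "\<not> r < h" "\<not> c < h" by blast
    then show "cnj (?R $$ (c,r)) = - ?R $$ (r,c)"
    proof cases
      case 1 then show ?thesis using rc Bp(2)[of r c] Cp(2)[of r c] by (simp add: unfold_half_def field_simps)
    next
      case 2 then show ?thesis using rc Bp(2)[of r "2*h-1-c"] Cp(2)[of r "2*h-1-c"] by (simp add: unfold_half_def field_simps)
    next
      case 3 then show ?thesis using rc Bp(2)[of "2*h-1-r" c] Cp(2)[of "2*h-1-r" c] by (simp add: unfold_half_def field_simps)
    next
      case 4 then show ?thesis using rc Bp(2)[of "2*h-1-r" "2*h-1-c"] Cp(2)[of "2*h-1-r" "2*h-1-c"]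
        by (simp add: unfold_half_def field_simps)
    qed
  qed
  have t1: "(\<Sum>r<2*h. ?R $$ (r,r)) = 0"
  proof -
    have "(\<Sum>r<2*h. ?R $$ (r,r)) = (\<Sum>r<h. ?R $$ (r,r)) + (\<Sum>r<h. ?R $$ (2*h-1-r,2*h-1-r))"
      by (rule sum_lessThan_double_reverse)
    also have "\<dots> = (\<Sum>r<h. (B $$ (r,r) + C $$ (r,r)) / 2) + (\<Sum>r<h. (B $$ (r,r) + C $$ (r,r)) / 2)"
      by (intro arg_cong2[where f="(+)"] sum.cong refl) (auto simp: unfold_half_def)
    also have "\<dots> = 0" using Bp(3) Cp(3) by (simp add: sum.distrib sum_divide_distrib[symmetric])
    finally show ?thesis .
  qed
  have t2: "(\<Sum>r<2*h. ?R $$ (r,2*h-1-r)) = 0"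
  proof -
    have "(\<Sum>r<2*h. ?R $$ (r,2*h-1-r)) = (\<Sum>r<h. ?R $$ (r,2*h-1-r)) + (\<Sum>r<h. ?R $$ (2*h-1-r,2*h-1-(2*h-1-r)))"
      using sum_lessThan_double_reverse[where g="\<lambda>r. ?R $$ (r,2*h-1-r)"] by simp
    also have "\<dots> = (\<Sum>r<h. (B $$ (r,r) - C $$ (r,r)) / 2) + (\<Sum>r<h. (B $$ (r,r) - C $$ (r,r)) / 2)"
      by (intro arg_cong2[where f="(+)"] sum.cong refl) (auto simp: unfold_half_def)
    also have "\<dots> = 0" using Bp(3) Cp(3) by (simp add: sum_subtractf sum_divide_distrib[symmetric])
    finally show ?thesis .
  qed
  show ?thesis using c fl he t1 t2 by (simp add: flip_sym_su_def)
qed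

definition fold_iso :: "nat \<Rightarrow> complex mat \<Rightarrow> complex mat \<times> complex mat" where
  "fold_iso h A = (fold_half h 1 A, fold_half h (-1) A)"

lemma fold_iso_lie_iso: "lie_iso_su_sum (flip_sym_su (2*h)) h (fold_iso h)"
  unfolding lie_iso_su_sum_def
proof (intro conjI ballI allI)
  show "bij_betw (fold_iso h) (flip_sym_su (2*h)) (su h \<times> su h)"
  proof (rule bij_betw_byWitness[where f'="\<lambda>(B,C). unfold_half h B C"])
    show "\<forall>A\<in>flip_sym_su (2*h). (\<lambda>(B,C). unfold_half h B C) (fold_iso h A) = A"
      by (auto simp: fold_iso_def unfold_fold_half)
    show "\<forall>BC\<in>su h \<times> su h. fold_iso h ((\<lambda>(B,C). unfold_half h B C) BC) = BC"
      by (auto simp: fold_iso_def fold_half_unfold suD(1))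
    show "fold_iso h ` flip_sym_su (2*h) \<subseteq> su h \<times> su h"
      by (auto simp: fold_iso_def fold_half_su)
    show "(\<lambda>(B,C). unfold_half h B C) ` (su h \<times> su h) \<subseteq> flip_sym_su (2*h)"
      by (auto simp: unfold_half_flip_sym_su)
  qed
next
  fix A B assume A: "A \<in> flip_sym_su (2*h)" and B: "B \<in> flip_sym_su (2*h)"
  show "fold_iso h (A + B) =
      (fst (fold_iso h A) + fst (fold_iso h B), snd (fold_iso h A) + snd (fold_iso h B))"
    using flip_sym_suD(1)[OF A] flip_sym_suD(1)[OF B] by (simp add: fold_iso_def fold_half_add)
  show "fold_iso h (commutator A B) =
      (commutator (fst (fold_iso h A)) (fst (fold_iso h B)),
       commutator (snd (fold_iso h A)) (snd (fold_iso h B)))"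
    using fold_half_commutator[OF A B] by (simp add: fold_iso_def)
next
  fix A c assume A: "A \<in> flip_sym_su (2*h)"
  show "fold_iso h (complex_of_real c \<cdot>\<^sub>m A) =
      (complex_of_real c \<cdot>\<^sub>m fst (fold_iso h A), complex_of_real c \<cdot>\<^sub>m snd (fold_iso h A))"
    using flip_sym_suD(1)[OF A] by (simp add: fold_iso_def fold_half_smult)
qed

section \<open>Generating the commutant strings by brackets\<close>

inductive_set generated_strings :: "nat \<Rightarrow> pauli list set" for n :: nat where
  gen: "j + 1 < n \<Longrightarrow> (A, B) \<in> {(PX, PX), (PY, PY), (PY, PZ)} \<Longrightarrow>
    two_site n A B j \<in> generated_strings n"
| mul: "P \<in> generated_strings n \<Longrightarrow> Q \<in> generated_strings n \<Longrightarrow> anticomm P Q \<Longrightarrow>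
    string_mul P Q \<in> generated_strings n"

lemma generated_strings_length: "P \<in> generated_strings n \<Longrightarrow> length P = n"
  by (induction rule: generated_strings.induct) auto

lemma generated_strings_a13: "P \<in> generated_strings n \<Longrightarrow> \<i> \<cdot>\<^sub>m pauli_mat P \<in> a13 n"
proof (induction rule: generated_strings.induct)
  case (gen j A B)
  then show ?case unfolding a13_def by (intro lie_gen.gen) blast
next
  case (mul P Q)
  have "length P = n" "length Q = n" using mul.hyps generated_strings_length by auto
  from commutator_string_mul[OF this mul.hyps(3)] show ?case
    using mul.IH unfolding a13_def by (simp only:) (intro lie_gen.smult lie_gen.bracket)
qed

lemma two_site_Cons: "Suc j < n \<Longrightarrow> PI # two_site n A B j = two_site (Suc n) A B (Suc j)"
proof (rule nth_equalityI)
  fix i assume "Suc j < n" "i < length (PI # two_site n A B j)"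
  then show "(PI # two_site n A B j) ! i = two_site (Suc n) A B (Suc j) ! i"
    by (cases i) (auto simp: two_site_nth)
qed simp

lemma two_site_snoc: "Suc j < n \<Longrightarrow> two_site n A B j @ [PI] = two_site (Suc n) A B j"
proof (rule nth_equalityI)
  fix i assume "Suc j < n" "i < length (two_site n A B j @ [PI])"
  then show "(two_site n A B j @ [PI]) ! i = two_site (Suc n) A B j ! i"
    by (cases "i < n") (auto simp: two_site_nth nth_append)
qed simp

lemma generated_strings_Cons_I: "P \<in> generated_strings n \<Longrightarrow> PI # P \<in> generated_strings (Suc n)"
proof (induction rule: generated_strings.induct)
  case (gen j A B)
  then show ?case using generated_strings.gen[of "Suc j" "Suc n" A B] by (simp add: two_site_Cons)
next
  case (mul P Q)
  have "length P = length Q" using mul.hyps generated_strings_length by auto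
  then show ?case using generated_strings.mul[OF mul.IH] mul.hyps(3) by (simp add: anticomm1_def)
qed

lemma generated_strings_snoc_I: "P \<in> generated_strings n \<Longrightarrow> P @ [PI] \<in> generated_strings (Suc n)"
proof (induction rule: generated_strings.induct)
  case (gen j A B)
  then show ?case using generated_strings.gen[of j "Suc n" A B] by (simp add: two_site_snoc)
next
  case (mul P Q)
  have l: "length P = length Q" using mul.hyps generated_strings_length by auto
  then show ?case using generated_strings.mul[OF mul.IH] mul.hyps(3) by (simp add: anticomm_append string_mul_append anticomm1_def)
qed

lemma commutant_strings_3_generated: "commutant_strings 3 \<subseteq> generated_strings 3"
proof
  have g_XXI: "[PX,PX,PI] \<in> generated_strings 3" using generated_strings.gen[of 0 3 PX PX] by (simp add: two_site_def numeral_3_eq_3)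
  have g_YYI: "[PY,PY,PI] \<in> generated_strings 3" using generated_strings.gen[of 0 3 PY PY] by (simp add: two_site_def numeral_3_eq_3)
  have g_YZI: "[PY,PZ,PI] \<in> generated_strings 3" using generated_strings.gen[of 0 3 PY PZ] by (simp add: two_site_def numeral_3_eq_3)
  have g_IXX: "[PI,PX,PX] \<in> generated_strings 3" using generated_strings.gen[of 1 3 PX PX] by (simp add: two_site_def numeral_3_eq_3)
  have g_IYY: "[PI,PY,PY] \<in> generated_strings 3" using generated_strings.gen[of 1 3 PY PY] by (simp add: two_site_def numeral_3_eq_3)
  have g_IYZ: "[PI,PY,PZ] \<in> generated_strings 3" using generated_strings.gen[of 1 3 PY PZ] by (simp add: two_site_def numeral_3_eq_3)
  have g_XZY: "[PX,PZ,PY] \<in> generated_strings 3" using generated_strings.mul[OF g_XXI g_IYY] by (simp add: string_mul_def anticomm1_def)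
  have g_XZZ: "[PX,PZ,PZ] \<in> generated_strings 3" using generated_strings.mul[OF g_XXI g_IYZ] by (simp add: string_mul_def anticomm1_def)
  have g_IXI: "[PI,PX,PI] \<in> generated_strings 3" using generated_strings.mul[OF g_YYI g_YZI] by (simp add: string_mul_def anticomm1_def)
  have g_YZX: "[PY,PZ,PX] \<in> generated_strings 3" using generated_strings.mul[OF g_YYI g_IXX] by (simp add: string_mul_def anticomm1_def)
  have g_YYX: "[PY,PY,PX] \<in> generated_strings 3" using generated_strings.mul[OF g_YZI g_IXX] by (simp add: string_mul_def anticomm1_def)
  have g_YXY: "[PY,PX,PY] \<in> generated_strings 3" using generated_strings.mul[OF g_YZI g_IYY] by (simp add: string_mul_def anticomm1_def)
  have g_YXZ: "[PY,PX,PZ] \<in> generated_strings 3" using generated_strings.mul[OF g_YZI g_IYZ] by (simp add: string_mul_def anticomm1_def)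
  have g_ZIY: "[PZ,PI,PY] \<in> generated_strings 3" using generated_strings.mul[OF g_YZI g_XZY] by (simp add: string_mul_def anticomm1_def)
  have g_ZIZ: "[PZ,PI,PZ] \<in> generated_strings 3" using generated_strings.mul[OF g_YZI g_XZZ] by (simp add: string_mul_def anticomm1_def)
  have g_YIZ: "[PY,PI,PZ] \<in> generated_strings 3" using generated_strings.mul[OF g_IXX g_YXY] by (simp add: string_mul_def anticomm1_def)
  have g_YIY: "[PY,PI,PY] \<in> generated_strings 3" using generated_strings.mul[OF g_IXX g_YXZ] by (simp add: string_mul_def anticomm1_def)
  have g_ZXZ: "[PZ,PX,PZ] \<in> generated_strings 3" using generated_strings.mul[OF g_IXX g_ZIY] by (simp add: string_mul_def anticomm1_def)
  have g_ZXY: "[PZ,PX,PY] \<in> generated_strings 3" using generated_strings.mul[OF g_IXX g_ZIZ] by (simp add: string_mul_def anticomm1_def)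
  have g_IIX: "[PI,PI,PX] \<in> generated_strings 3" using generated_strings.mul[OF g_IYY g_IYZ] by (simp add: string_mul_def anticomm1_def)
  have g_IZY: "[PI,PZ,PY] \<in> generated_strings 3" using generated_strings.mul[OF g_IYY g_IXI] by (simp add: string_mul_def anticomm1_def)
  have g_ZYX: "[PZ,PY,PX] \<in> generated_strings 3" using generated_strings.mul[OF g_IYY g_ZIZ] by (simp add: string_mul_def anticomm1_def)
  have g_ZZI: "[PZ,PZ,PI] \<in> generated_strings 3" using generated_strings.mul[OF g_IYY g_ZXY] by (simp add: string_mul_def anticomm1_def)
  have g_IZZ: "[PI,PZ,PZ] \<in> generated_strings 3" using generated_strings.mul[OF g_IYZ g_IXI] by (simp add: string_mul_def anticomm1_def)
  have g_XYY: "[PX,PY,PY] \<in> generated_strings 3" using generated_strings.mul[OF g_XXI g_IZY] by (simp add: string_mul_def anticomm1_def)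
  have g_XYZ: "[PX,PY,PZ] \<in> generated_strings 3" using generated_strings.mul[OF g_XXI g_IZZ] by (simp add: string_mul_def anticomm1_def)
  have g_XIX: "[PX,PI,PX] \<in> generated_strings 3" using generated_strings.mul[OF g_YYI g_ZYX] by (simp add: string_mul_def anticomm1_def)
  have g_XII: "[PX,PI,PI] \<in> generated_strings 3" using generated_strings.mul[OF g_YZI g_ZZI] by (simp add: string_mul_def anticomm1_def)
  have g_ZZX: "[PZ,PZ,PX] \<in> generated_strings 3" using generated_strings.mul[OF g_YZI g_XIX] by (simp add: string_mul_def anticomm1_def)
  have g_ZYI: "[PZ,PY,PI] \<in> generated_strings 3" using generated_strings.mul[OF g_IXX g_ZZX] by (simp add: string_mul_def anticomm1_def)
  note all = g_XXI g_YYI g_YZI g_IXX g_IYY g_IYZ g_XZY g_XZZ g_IXI g_YZX g_YYX g_YXY g_YXZ g_ZIY g_ZIZ g_YIZ g_YIY g_ZXZ g_ZXY g_IIX g_IZY g_ZYX g_ZZI g_IZZ g_XYY g_XYZ g_XIX g_XII g_ZZX g_ZYI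
  fix P assume P: "P \<in> commutant_strings 3"
  then have l: "length P = 3" and s: "\<not> anticomm_Xn P" and ne: "P \<noteq> [PI,PI,PI]" "P \<noteq> [PX,PX,PX]"
    by (auto simp: commutant_strings_iff numeral_3_eq_3)
  obtain a b c where abc: "P = [a,b,c]" using l by (auto simp: numeral_3_eq_3 length_Suc_conv)
  show "P \<in> generated_strings 3" using s ne all unfolding abc
    by (cases a; cases b; cases c) (simp_all add: anticomm_X_def)
qed

lemma ex_pauli: "(\<exists>a. Q a) \<longleftrightarrow> Q PI \<or> Q PX \<or> Q PY \<or> Q PZ"
  by (metis pauli.exhaust)

definition site :: "nat \<Rightarrow> nat \<Rightarrow> pauli \<Rightarrow> pauli list" where
  "site m i a = (replicate m PI)[i := a]"

lemma length_site [simp]: "length (site m i a) = m"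
  by (simp add: site_def)

lemma site_Cons: "site (Suc m) 0 a = a # replicate m PI" "site (Suc m) (Suc i) a = PI # site m i a"
  by (simp_all add: site_def)

lemma anticomm_site: "i < length M \<Longrightarrow> anticomm M (site (length M) i a) = anticomm1 (M ! i) a"
proof (induction M arbitrary: i)
  case (Cons c M)
  then show ?case by (cases i) (simp_all add: site_Cons anticomm1_def)
qed simp

lemma anticomm_Xn_site: "i < m \<Longrightarrow> anticomm_Xn (site m i a) = anticomm_X a"
proof (induction m arbitrary: i)
  case (Suc m)
  then show ?case by (cases i) (simp_all add: site_Cons anticomm_X_def)
qed simp

lemma ex_anticomm_string:
  assumes MI: "M \<noteq> replicate (length M) PI" and MX: "M = replicate (length M) PX \<longrightarrow> b"
  shows "\<exists>\<gamma>. length \<gamma> = length M \<and> anticomm M \<gamma> \<and> anticomm_Xn \<gamma> = b"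
proof -
  let ?m = "length M"
  show ?thesis
  proof (cases "\<exists>j<?m. anticomm_X (M ! j)")
    case True
    then obtain j where j: "j < ?m" "anticomm_X (M ! j)" by blast
    then obtain a where "anticomm1 (M ! j) a" "anticomm_X a = b"
      by (cases "M ! j"; cases b) (auto simp: ex_pauli anticomm1_def anticomm_X_def)
    then show ?thesis
      using j by (intro exI[of _ "site ?m j a"]) (simp add: anticomm_site anticomm_Xn_site)
  next
    case False
    then have IX: "M ! j = PI \<or> M ! j = PX" if "j < ?m" for j
      using that by (cases "M ! j") (auto simp: anticomm_X_def)
    obtain i where i: "i < ?m" "M ! i = PX"
      using MI IX by (metis length_replicate nth_equalityI nth_replicate)
    show ?thesis
    proof (cases b)
      case True
      then show ?thesis
        using i by (intro exI[of _ "site ?m i PY"])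
          (simp add: anticomm_site anticomm_Xn_site anticomm1_def anticomm_X_def)
    next
      case False
      then obtain k where k: "k < ?m" "M ! k = PI"
        using MX IX by (metis length_replicate nth_equalityI nth_replicate)
      then show ?thesis
        using i False by (intro exI[of _ "string_mul (site ?m i PY) (site ?m k PZ)"])
          (simp add: anticomm_string_mul anticomm_Xn_string_mul anticomm_site anticomm_Xn_site
            anticomm1_def anticomm_X_def)
    qed
  qed
qed

text \<open>Induction step: a string \<open>\<rho> M \<sigma>\<close> of length \<open>n + 1\<close> is the product of two anticommuting
  strings with an identity at one end, \<open>(\<rho>, M \<gamma>, I)\<close> and \<open>(I, \<gamma>, \<sigma>)\<close>, where \<open>\<gamma>\<close> anticommutes
  with \<open>M\<close>; padding a commutant string of length \<open>n\<close> by \<open>I\<close> preserves membership.\<close>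

context
  fixes n :: nat
  assumes n: "3 \<le> n" and IH: "commutant_strings n \<subseteq> generated_strings n"
begin

lemma Cons_I_generated_nonX:
  "length Q = n \<Longrightarrow> \<not> anticomm_Xn Q \<Longrightarrow> Q \<noteq> replicate n PI \<Longrightarrow> Q \<noteq> replicate n PX \<Longrightarrow>
   PI # Q \<in> generated_strings (Suc n)"
  using IH generated_strings_Cons_I by (auto simp: commutant_strings_iff)

lemma snoc_I_generated_nonX:
  "length Q = n \<Longrightarrow> \<not> anticomm_Xn Q \<Longrightarrow> Q \<noteq> replicate n PI \<Longrightarrow> Q \<noteq> replicate n PX \<Longrightarrow>
   Q @ [PI] \<in> generated_strings (Suc n)"
  using IH generated_strings_snoc_I by (auto simp: commutant_strings_iff)

lemma Xn_snoc_I_generated: "replicate n PX @ [PI] \<in> generated_strings (Suc n)"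
proof -
  obtain k where k: "n = k + 3" using n by (metis add.commute le_iff_add)
  have A2: "([PX,PY,PZ] @ replicate k PX) @ [PI] \<in> generated_strings (Suc n)"
    by (rule snoc_I_generated_nonX) (unfold k, auto simp: anticomm_X_def dest: arg_cong[where f=set])
  have B2: "PI # ([PI,PY] @ replicate k PI @ [PZ]) \<in> generated_strings (Suc n)"
    by (rule Cons_I_generated_nonX)
      (unfold k, auto simp: anticomm_X_def anticomm_Xn_append dest: arg_cong[where f=set])
  have B1: "[PX,PY] @ replicate (Suc k) PX @ [PZ] \<in> generated_strings (Suc n)"
    using generated_strings.mul[OF A2 B2]
    by (simp add: anticomm_append string_mul_append string_mul_replicate anticomm_replicate anticomm1_def)
  have A1: "PI # ([PZ] @ replicate (Suc k) PI @ [PZ]) \<in> generated_strings (Suc n)"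
    by (rule Cons_I_generated_nonX)
      (unfold k, auto simp: anticomm_X_def anticomm_Xn_append dest: arg_cong[where f=set])
  show ?thesis
    using generated_strings.mul[OF A1 B1] unfolding k
    by (simp add: anticomm_append string_mul_append string_mul_replicate anticomm_replicate
        anticomm1_def numeral_3_eq_3)
qed

lemma Xn_Cons_I_generated: "PI # replicate n PX \<in> generated_strings (Suc n)"
proof -
  obtain k where k: "n = k + 3" using n by (metis add.commute le_iff_add)
  have A2: "PI # (replicate k PX @ [PZ,PY,PX]) \<in> generated_strings (Suc n)"
    by (rule Cons_I_generated_nonX)
      (unfold k, auto simp: anticomm_X_def anticomm_Xn_append dest: arg_cong[where f=set])
  have B2: "([PZ] @ replicate k PI @ [PY,PI]) @ [PI] \<in> generated_strings (Suc n)"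
    by (rule snoc_I_generated_nonX)
      (unfold k, auto simp: anticomm_X_def anticomm_Xn_append dest: arg_cong[where f=set])
  have B1: "[PZ] @ replicate k PX @ [PX,PY,PX] \<in> generated_strings (Suc n)"
    using generated_strings.mul[OF A2 B2]
    by (simp add: anticomm_append string_mul_append string_mul_replicate anticomm_replicate anticomm1_def)
  have A1: "([PZ] @ replicate k PI @ [PI,PZ]) @ [PI] \<in> generated_strings (Suc n)"
    by (rule snoc_I_generated_nonX)
      (unfold k, auto simp: anticomm_X_def anticomm_Xn_append dest: arg_cong[where f=set])
  have "anticomm (([PZ] @ replicate k PI @ [PI,PZ]) @ [PI]) ([PZ] @ replicate k PX @ [PX,PY,PX])"
    by (simp add: anticomm_append anticomm_replicate anticomm1_def)
  moreover have "string_mul (([PZ] @ replicate k PI @ [PI,PZ]) @ [PI]) ([PZ] @ replicate k PX @ [PX,PY,PX])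
      = PI # replicate n PX"
    unfolding k by (simp add: string_mul_append string_mul_replicate replicate_app_Cons_same numeral_3_eq_3)
  ultimately show ?thesis
    using generated_strings.mul[OF A1 B1] by simp
qed

lemma Cons_I_generated:
  "length Q = n \<Longrightarrow> \<not> anticomm_Xn Q \<Longrightarrow> Q \<noteq> replicate n PI \<Longrightarrow> PI # Q \<in> generated_strings (Suc n)"
  using Cons_I_generated_nonX Xn_Cons_I_generated by (cases "Q = replicate n PX") auto

lemma snoc_I_generated:
  "length Q = n \<Longrightarrow> \<not> anticomm_Xn Q \<Longrightarrow> Q \<noteq> replicate n PI \<Longrightarrow> Q @ [PI] \<in> generated_strings (Suc n)"
  using snoc_I_generated_nonX Xn_snoc_I_generated by (cases "Q = replicate n PX") auto

lemma inner_nontrivial_generated: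
  assumes r: "\<rho> \<noteq> PI" and s: "\<sigma> \<noteq> PI" and l: "Suc (length M) = n"
    and MI: "M \<noteq> replicate (length M) PI" and MX: "M = replicate (length M) PX \<longrightarrow> anticomm_X \<sigma>"
    and R: "\<not> anticomm_Xn (\<rho> # M @ [\<sigma>])"
  shows "\<rho> # M @ [\<sigma>] \<in> generated_strings (Suc n)"
proof -
  obtain \<gamma> where \<gamma>: "length \<gamma> = length M" "anticomm M \<gamma>" "anticomm_Xn \<gamma> = anticomm_X \<sigma>"
    using ex_anticomm_string[OF MI MX] by blast
  have A: "(\<rho> # string_mul M \<gamma>) @ [PI] \<in> generated_strings (Suc n)"
  proof (rule snoc_I_generated)
    show "length (\<rho> # string_mul M \<gamma>) = n" using l \<gamma> by simp
    show "\<not> anticomm_Xn (\<rho> # string_mul M \<gamma>)"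
      using R \<gamma> by (simp add: anticomm_Xn_string_mul anticomm_Xn_append)
    show "\<rho> # string_mul M \<gamma> \<noteq> replicate n PI" using r l by (cases n) auto
  qed
  have B: "PI # (\<gamma> @ [\<sigma>]) \<in> generated_strings (Suc n)"
  proof (rule Cons_I_generated)
    show "length (\<gamma> @ [\<sigma>]) = n" using l \<gamma> by simp
    show "\<not> anticomm_Xn (\<gamma> @ [\<sigma>])" using \<gamma> by (simp add: anticomm_Xn_append)
    show "\<gamma> @ [\<sigma>] \<noteq> replicate n PI"
      using s by (metis in_set_replicate last_in_set last_snoc snoc_eq_iff_butlast)
  qed
  have "anticomm (string_mul M \<gamma>) \<gamma>"
    using \<gamma> anticomm_string_mul[of M \<gamma> \<gamma>] by (simp add: anticomm_sym)
  then have "anticomm ((\<rho> # string_mul M \<gamma>) @ [PI]) (PI # (\<gamma> @ [\<sigma>]))"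
    using \<gamma> by (simp add: anticomm_append anticomm1_def)
  moreover have "string_mul ((\<rho> # string_mul M \<gamma>) @ [PI]) (PI # (\<gamma> @ [\<sigma>])) = \<rho> # M @ [\<sigma>]"
    using \<gamma> by (simp add: string_mul_append string_mul_cancel_right)
  ultimately show ?thesis
    using generated_strings.mul[OF A B] by simp
qed

lemma inner_trivial_generated:
  assumes r: "\<rho> \<noteq> PI" and s: "\<sigma> \<noteq> PI" and l: "n = Suc (Suc k)"
    and R: "\<not> anticomm_Xn (\<rho> # replicate (Suc k) PI @ [\<sigma>])"
  shows "\<rho> # replicate (Suc k) PI @ [\<sigma>] \<in> generated_strings (Suc n)"
proof -
  have k: "0 < k" using n l by simp
  define t where "t = (if \<sigma> = PX then PZ else PX)"
  define a where "a = (if anticomm_X \<rho> \<noteq> anticomm_X t then PY else PX)"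
  have t: "anticomm1 t \<sigma>" "t \<noteq> PI"
    using s by (cases \<sigma>) (auto simp: t_def anticomm1_def)
  have a: "a \<noteq> PI" "anticomm_X a = (anticomm_X \<rho> \<noteq> anticomm_X t)"
    by (auto simp: a_def anticomm_X_def)
  have \<rho>\<sigma>: "anticomm_X \<rho> = anticomm_X \<sigma>"
    using R by (simp add: anticomm_Xn_append anticomm_X_def)
  have A: "\<rho> # (a # replicate k PI) @ [t] \<in> generated_strings (Suc n)"
  proof (rule inner_nontrivial_generated[OF r t(2)])
    show "Suc (length (a # replicate k PI)) = n" using l by simp
    show "a # replicate k PI \<noteq> replicate (length (a # replicate k PI)) PI" using a by simp
    show "a # replicate k PI = replicate (length (a # replicate k PI)) PX \<longrightarrow> anticomm_X t"
      using a k by (cases k) (auto simp: a_def anticomm_X_def t_def)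
    show "\<not> anticomm_Xn (\<rho> # (a # replicate k PI) @ [t])"
      using a by (cases "anticomm_X \<rho>"; cases "anticomm_X t") (simp_all add: anticomm_Xn_append)
  qed
  have "anticomm_X (pauli_mul t \<sigma>) = (anticomm_X t \<noteq> anticomm_X \<sigma>)"
    by (cases t; cases \<sigma>) (auto simp: anticomm_X_def)
  then have B: "PI # ((a # replicate k PI) @ [pauli_mul t \<sigma>]) \<in> generated_strings (Suc n)"
    using a \<rho>\<sigma> l by (intro Cons_I_generated) (auto simp: anticomm_Xn_append)
  have "anticomm (\<rho> # (a # replicate k PI) @ [t]) (PI # ((a # replicate k PI) @ [pauli_mul t \<sigma>]))"
    using t by (simp add: anticomm_append anticomm1_def) (cases t; cases \<sigma>; simp)
  moreover have "string_mul (\<rho> # (a # replicate k PI) @ [t]) (PI # ((a # replicate k PI) @ [pauli_mul t \<sigma>]))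
      = \<rho> # replicate (Suc k) PI @ [\<sigma>]"
    by (simp add: string_mul_append string_mul_replicate pauli_mul_cancel)
  ultimately show ?thesis
    using generated_strings.mul[OF A B] by simp
qed

lemma commutant_strings_generated_Suc: "commutant_strings (Suc n) \<subseteq> generated_strings (Suc n)"
proof
  fix R assume "R \<in> commutant_strings (Suc n)"
  then have lR: "length R = Suc n" and sR: "\<not> anticomm_Xn R"
    and RX: "R \<noteq> replicate (Suc n) PX" and RI: "R \<noteq> replicate (Suc n) PI"
    by (auto simp: commutant_strings_iff)
  obtain \<rho> M \<sigma> where R: "R = \<rho> # M @ [\<sigma>]" and lM: "Suc (length M) = n"
  proof -
    obtain R' \<sigma> where R': "R = R' @ [\<sigma>]"
      using lR by (cases R rule: rev_cases) auto
    moreover obtain \<rho> M where "R' = \<rho> # M"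
      using R' lR n by (cases R') auto
    ultimately show thesis
      using that lR by simp
  qed
  consider "\<rho> = PI" | "\<sigma> = PI" | "\<rho> \<noteq> PI" "\<sigma> \<noteq> PI" "M = replicate (length M) PI"
    | "\<rho> \<noteq> PI" "\<sigma> \<noteq> PI" "M \<noteq> replicate (length M) PI"
    by blast
  then show "R \<in> generated_strings (Suc n)"
  proof cases
    case 1
    then have "M @ [\<sigma>] \<noteq> replicate n PI"
      using RI R by (metis append_Cons replicate_Suc)
    then show ?thesis
      using Cons_I_generated[of "M @ [\<sigma>]"] 1 R lM sR by (simp add: anticomm_X_def)
  next
    case 2
    then have "\<rho> # M \<noteq> replicate n PI"
      using RI R by (metis append_Cons replicate_Suc replicate_append_same)
    then show ?thesis
      using snoc_I_generated[of "\<rho> # M"] 2 R lM sR by (simp add: anticomm_X_def anticomm_Xn_append)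
  next
    case 3
    then obtain k where k: "length M = Suc k" "n = Suc (Suc k)"
      using lM n by (cases "length M") auto
    then have "R = \<rho> # replicate (Suc k) PI @ [\<sigma>]"
      using R 3(3) by metis
    then show ?thesis
      using inner_trivial_generated[of \<rho> \<sigma> k] 3(1,2) k sR by simp
  next
    case 4
    have "anticomm_X \<sigma>" if MX: "M = replicate (length M) PX"
    proof (rule ccontr)
      assume \<sigma>: "\<not> anticomm_X \<sigma>"
      have "\<not> anticomm_Xn M" by (subst MX) simp
      then have "\<not> anticomm_X \<rho>"
        using sR R \<sigma> by (simp add: anticomm_Xn_append)
      then have "\<rho> = PX"
        using 4 by (cases \<rho>) (simp_all add: anticomm_X_def)
      moreover have "\<sigma> = PX"
        using 4 \<sigma> by (cases \<sigma>) (simp_all add: anticomm_X_def)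
      ultimately show False
        using RX R MX lM by (metis replicate_Suc replicate_append_same)
    qed
    then show ?thesis
      using inner_nontrivial_generated[of \<rho> \<sigma> M] 4 R lM sR by blast
  qed
qed

end

lemma commutant_strings_generated: "3 \<le> n \<Longrightarrow> commutant_strings n \<subseteq> generated_strings n"
proof (induction n rule: dec_induct)
  case base
  then show ?case by (rule commutant_strings_3_generated)
next
  case (step m)
  then show ?case by (intro commutant_strings_generated_Suc) auto
qed

lemma commutant_span_subset_a13:
  assumes "3 \<le> n"
  shows "commutant_span n \<subseteq> a13 n"
proof
  fix A assume "A \<in> commutant_span n"
  then show "A \<in> a13 n"
  proof (induction rule: real_span_mat.induct)
    case (gen A)
    then show ?case
      using commutant_strings_generated[OF assms] generated_strings_a13 by auto
  qed (auto simp: a13_def intro: lie_gen.intros)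
qed

theorem mainTheorem16:
  fixes n :: nat
  assumes "n \<ge> 3"
  shows "a13 n = real_span_mat (2 ^ n)
           ((\<lambda>P. \<i> \<cdot>\<^sub>m pauli_mat P) `
             {P. length P = n \<and> P \<noteq> replicate n PI \<and> P \<noteq> replicate n PX \<and>
                 pauli_mat P * pauli_mat (replicate n PX) =
                 pauli_mat (replicate n PX) * pauli_mat P})
       \<and> (\<exists>f. lie_iso_su_sum (a13 n) (2 ^ (n - 1)) f)"
proof
  have span: "a13 n = commutant_span n"
    using a13_subset_commutant_span[OF assms] commutant_span_subset_a13[OF assms] by blast
  then show "a13 n = real_span_mat (2 ^ n) ((\<lambda>P. \<i> \<cdot>\<^sub>m pauli_mat P) `
      {P. length P = n \<and> P \<noteq> replicate n PI \<and> P \<noteq> replicate n PX \<and>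
          pauli_mat P * pauli_mat (replicate n PX) = pauli_mat (replicate n PX) * pauli_mat P})"
    by (simp add: commutant_strings_def)
  have "(2::nat) ^ n = 2 * 2 ^ (n - 1)"
    using assms by (cases n) auto
  then have "a13 n = flip_sym_su (2 * 2 ^ (n - 1))"
    using span commutant_span_subset_flip_sym_su[of n] flip_sym_su_subset_commutant_span[of n] by auto
  then show "\<exists>f. lie_iso_su_sum (a13 n) (2 ^ (n - 1)) f"
    by (metis fold_iso_lie_iso)
qed

end
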